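(* Let $X_t=I_n(f_t)$, $t\in[0,1]$, be a continuous process in the $n$-th homogeneous Wiener chaos of an isonormal Gaussian process over a real separable Hilbert space $\mathcal{H}$, and assume Assumptions 1, 3 and 4 of the context hold (with constants $C,\theta$ and $\beta$). Let $\rho<\theta/2$ and let $g:[0,1]\to\mathbb{R}$ be a deterministic $\tau$-Hölder continuous function with $\tau+\rho>1$ and Hölder norm $\|g\|_\tau\neq0$. Then at least one of the following holds: \[\mathbb{E}\Big(\int_0^1 g_t\,dX_t\Big)^2\geq\frac{\beta}{4}\Big(\sup_{r\in[0,1]}|g_r|\Big)^2\,\mathbb{E}(X_1)^2,\] or \[\mathbb{E}\Big(\int_0^1 g_t\,dX_t\Big)^2\geq\frac{\beta}{4}\Big(\sup_{r\in[0,1]}|g_r|\Big)^2\,\mathbb{E}(X_{a,b})^2\] for some interval $[a,b]\subset[0,1]$ with \[\Big(\frac{\sup_{r\in[0,1]}|g_r|}{2\|g\|_\tau}\Big)^{1/\tau}\leq|b-a|.\]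
   Context: $I_n$ is the $n$-th multiple Wiener–Itô integral with $\mathbb{E}[I_n(f)I_n(g)]=n!\langle f,g\rangle_{\mathcal{H}^{\otimes n}}$, $f_t\in\mathcal{H}^{\hat\otimes n}$; $f_{s,t}=f_t-f_s$, $X_{s,t}=X_t-X_s$. $\int_0^1 g_t\,dX_t$ is a Young integral. $\|g\|_\tau=\sup_{s\ne t}|g_t-g_s|/|t-s|^\tau$. Assumption 1: $f_0=0$ and there are $C>0$, $\theta>1$ with $0<\|f_t-f_s\|_{\mathcal{H}^{\otimes n}}\leq C|t-s|^{\theta/2}$ for all $0\le s<t\le1$ (so paths of $X$ are a.s. $\rho$-Hölder for every $\rho<\theta/2$). Assumption 3: there is $\beta\in(0,1)$ such that for any $m\in\mathbb{N}^+$, $k,l\in\mathbb{N}$, any nonzero $(a_1,\dots,a_m)$, any $t_1<\cdots<t_m$ in $[0,1]$, any $s_1,\dots,s_k\in[0,t_1)$ and $r_1,\dots,r_l\in(t_m,1]$: $\|\Phi-P\Phi\|^2>\beta\|\Phi\|^2$ (norms in $\mathcal{H}^{\otimes n}$), where $\Phi=a_1f_{t_1,t_2}+\cdots+a_mf_{t_{m-1},t_m}$ and $P$ is the orthogonal projection onto $\overline{\mathrm{Span}}\{f_{0,s_1},\dots,f_{s_k,t_1},f_{t_m,r_1},\dots,f_{r_{l-1},r_l}\}$. Assumption 4: for any $[u,v]\subset[s,t]\subset[0,1]$, $\langle f_v-f_u,f_t-f_s\rangle_{\mathcal{H}^{\otimes n}}\geq0$. *)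

theory Defs
  imports "HOL-Analysis.Analysis" "HOL-Probability.Probability"
begin

definition orth_proj :: "'h::real_inner set \<Rightarrow> 'h \<Rightarrow> 'h" where
  "orth_proj S x = (THE p. p \<in> S \<and> (\<forall>y\<in>S. inner (x - p) y = 0))"

fun incr_list :: "(real \<Rightarrow> 'h::real_vector) \<Rightarrow> real list \<Rightarrow> 'h list" where
  "incr_list f (a # b # ps) = (f b - f a) # incr_list f (b # ps)"
| "incr_list f _ = []"

definition assumption1 :: "(real \<Rightarrow> 'h::real_inner) \<Rightarrow> real \<Rightarrow> real \<Rightarrow> bool" where
  "assumption1 f C \<theta> \<longleftrightarrow> f 0 = 0 \<and> C > 0 \<and> \<theta> > 1 \<and>
     (\<forall>s t. 0 \<le> s \<and> s < t \<and> t \<le> 1 \<longrightarrow>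
        0 < norm (f t - f s) \<and> norm (f t - f s) \<le> C * (t - s) powr (\<theta> / 2))"

text \<open>Points t_1 < ... < t_m (m >= 2) are the
  list ts; coefficients a_1,...,a_(m-1) of the m-1 consecutive increments form the list as;
  the s_i and r_j are arbitrary lists of points in [0,t_1) and (t_m,1].\<close>
definition assumption3 :: "(real \<Rightarrow> 'h::real_inner) \<Rightarrow> real \<Rightarrow> bool" where
  "assumption3 f \<beta> \<longleftrightarrow> 0 < \<beta> \<and> \<beta> < 1 \<and>
     (\<forall>ts as ss rs.
        2 \<le> length ts \<and> sorted_wrt (<) ts \<and> set ts \<subseteq> {0..1} \<and>
        length as = length ts - 1 \<and> (\<exists>a\<in>set as. a \<noteq> 0) \<and>
        set ss \<subseteq> {0..<hd ts} \<and> set rs \<subseteq> {last ts<..1} \<longrightarrow>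
        (let \<Phi> = (\<Sum>i<length as. as ! i *\<^sub>R (f (ts ! Suc i) - f (ts ! i)));
             V = closure (span (set (incr_list f (0 # ss @ [hd ts]) @ incr_list f (last ts # rs))))
         in norm (\<Phi> - orth_proj V \<Phi>)^2 > \<beta> * (norm \<Phi>)^2))"

definition assumption4 :: "(real \<Rightarrow> 'h::real_inner) \<Rightarrow> bool" where
  "assumption4 f \<longleftrightarrow> (\<forall>u v s t. 0 \<le> s \<and> s \<le> u \<and> u \<le> v \<and> v \<le> t \<and> t \<le> 1 \<longrightarrow>
      inner (f v - f u) (f t - f s) \<ge> 0)"

definition holder_on :: "real \<Rightarrow> (real \<Rightarrow> real) \<Rightarrow> bool" where
  "holder_on \<tau> g \<longleftrightarrow> (\<exists>K. \<forall>s\<in>{0..1}. \<forall>t\<in>{0..1}. \<bar>g t - g s\<bar> \<le> K * \<bar>t - s\<bar> powr \<tau>)"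

definition holder_norm :: "real \<Rightarrow> (real \<Rightarrow> real) \<Rightarrow> real" where
  "holder_norm \<tau> g = (SUP st \<in> {(s,t). s \<in> {0..1} \<and> t \<in> {0..1} \<and> s \<noteq> t}.
       \<bar>g (snd st) - g (fst st)\<bar> / \<bar>snd st - fst st\<bar> powr \<tau>)"

definition tagged_partition01 :: "nat \<Rightarrow> (nat \<Rightarrow> real) \<Rightarrow> (nat \<Rightarrow> real) \<Rightarrow> bool" where
  "tagged_partition01 N p \<xi> \<longleftrightarrow> N > 0 \<and> p 0 = 0 \<and> p N = 1 \<and>
     (\<forall>i<N. p i < p (Suc i) \<and> p i \<le> \<xi> i \<and> \<xi> i \<le> p (Suc i))"

definition mesh :: "nat \<Rightarrow> (nat \<Rightarrow> real) \<Rightarrow> real" where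
  "mesh N p = Max ((\<lambda>i. p (Suc i) - p i) ` {..<N})"

definition young_has_integral :: "(real \<Rightarrow> real) \<Rightarrow> (real \<Rightarrow> real) \<Rightarrow> real \<Rightarrow> bool" where
  "young_has_integral g x L \<longleftrightarrow> (\<forall>\<epsilon>>0. \<exists>\<delta>>0. \<forall>N p \<xi>.
      tagged_partition01 N p \<xi> \<and> mesh N p < \<delta> \<longrightarrow>
      \<bar>(\<Sum>i<N. g (\<xi> i) * (x (p (Suc i)) - x (p i))) - L\<bar> < \<epsilon>)"

definition young_integral :: "(real \<Rightarrow> real) \<Rightarrow> (real \<Rightarrow> real) \<Rightarrow> real" where
  "young_integral g x = (THE L. young_has_integral g x L)"

end

theory Submission
  imports Defs
begin

text \<open>
  The Young integral \<open>Y = \<integral>\<^sub>0\<^sup>1 g dX\<close> is the limit of the pathwise Riemann sums. Almost surely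
  these are the images under \<open>I\<^sub>n\<close> of the Riemann sums of \<open>g\<close> against \<open>f\<close>, which converge to some
  \<open>F\<close> by the Young--Loeve estimate; hence \<open>Y = I\<^sub>n(F)\<close> almost surely and \<open>E Y\<^sup>2 = n! \<parallel>F\<parallel>\<^sup>2\<close>.

  Around a maximum point of \<open>\<bar>g\<bar>\<close> the Hoelder bound gives an interval \<open>[a, b]\<close> of length at least
  \<open>(sup \<bar>g\<bar> / (2 \<parallel>g\<parallel>\<^sub>\<tau>)) powr (1 / \<tau>)\<close> (or all of \<open>[0, 1]\<close>) on which \<open>\<sigma> g \<ge> sup \<bar>g\<bar> / 2\<close> for a
  sign \<open>\<sigma>\<close>. Approximate \<open>F\<close> by Riemann sums over partitions containing a uniform grid of \<open>[a, b]\<close>.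
  The part over \<open>[a, b]\<close> has, by Assumption 3, at least a fraction \<open>\<beta>\<close> of its squared norm
  orthogonal to the increments outside \<open>[a, b]\<close>, which carry the rest of the sum; and since by
  Assumption 4 all increments inside \<open>[a, b]\<close> have nonnegative inner product with \<open>f\<^sub>b - f\<^sub>a\<close>,
  testing against \<open>f\<^sub>b - f\<^sub>a\<close> shows that this part has norm at least
  \<open>(sup \<bar>g\<bar> / 2) \<parallel>f\<^sub>b - f\<^sub>a\<parallel>\<close>. Hence \<open>\<parallel>F\<parallel>\<^sup>2 \<ge> \<beta> / 4 (sup \<bar>g\<bar>)\<^sup>2 \<parallel>f\<^sub>b - f\<^sub>a\<parallel>\<^sup>2\<close>, and
  \<open>n! \<parallel>f\<^sub>b - f\<^sub>a\<parallel>\<^sup>2 = E (X\<^sub>b - X\<^sub>a)\<^sup>2\<close>.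
\<close>

section \<open>Riemann sums along point lists\<close>

text \<open>Partitions of \<open>[0, 1]\<close> are sorted point lists, possibly with repeated points, and Riemann
  sums are tagged at left endpoints.\<close>
fun riemann_sum :: "(real \<Rightarrow> real) \<Rightarrow> (real \<Rightarrow> 'a::real_normed_vector) \<Rightarrow> real list \<Rightarrow> 'a" where
  "riemann_sum g x (a # b # q) = g a *\<^sub>R (x b - x a) + riemann_sum g x (b # q)"
| "riemann_sum g x _ = 0"

fun gaps_le :: "real \<Rightarrow> real list \<Rightarrow> bool" where
  "gaps_le d (a # b # q) \<longleftrightarrow> b - a \<le> d \<and> gaps_le d (b # q)"
| "gaps_le d _ \<longleftrightarrow> True"

fun gap_powr_sum :: "real \<Rightarrow> real list \<Rightarrow> real" where
  "gap_powr_sum \<gamma> (a # b # q) = (b - a) powr \<gamma> + gap_powr_sum \<gamma> (b # q)"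
| "gap_powr_sum \<gamma> _ = 0"

definition partition01 :: "real list \<Rightarrow> bool" where
  "partition01 q \<longleftrightarrow> sorted q \<and> q \<noteq> [] \<and> hd q = 0 \<and> last q = 1 \<and> set q \<subseteq> {0..1}"

definition riemann_sum_limit :: "(real \<Rightarrow> real) \<Rightarrow> (real \<Rightarrow> 'a::real_normed_vector) \<Rightarrow> 'a \<Rightarrow> bool" where
  "riemann_sum_limit g x L \<longleftrightarrow>
     (\<forall>\<epsilon>>0. \<exists>\<delta>>0. \<forall>q. partition01 q \<and> gaps_le \<delta> q \<longrightarrow> norm (riemann_sum g x q - L) < \<epsilon>)"

lemma sorted_hd_le_le_last: "sorted R \<Longrightarrow> y \<in> set R \<Longrightarrow> hd R \<le> y \<and> y \<le> last R"
proof (induction R)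
  case (Cons r R)
  then show ?case
    by (cases R) auto
qed simp

lemma riemann_sum_conv_sum:
  "riemann_sum g x q = (\<Sum>i<length q - 1. g (q!i) *\<^sub>R (x (q!Suc i) - x (q!i)))"
  by (induction g x q rule: riemann_sum.induct) (simp_all add: sum.lessThan_Suc_shift del: sum.lessThan_Suc)

lemma gap_powr_sum_conv_sum: "gap_powr_sum \<gamma> q = (\<Sum>i<length q - 1. (q!Suc i - q!i) powr \<gamma>)"
  by (induction \<gamma> q rule: gap_powr_sum.induct) (simp_all add: sum.lessThan_Suc_shift del: sum.lessThan_Suc)

lemma gaps_le_iff_nth: "gaps_le d q \<longleftrightarrow> (\<forall>i. Suc i < length q \<longrightarrow> q!Suc i - q!i \<le> d)"
proof (induction d q rule: gaps_le.induct)
  case (1 d a b q)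
  then show ?case
    by (auto simp: less_Suc_eq_0_disj)
qed auto

lemma gaps_le_mono: "gaps_le d q \<Longrightarrow> d \<le> d' \<Longrightarrow> gaps_le d' q"
  by (auto simp: gaps_le_iff_nth)

lemma gaps_le_append:
  "gaps_le d xs \<Longrightarrow> gaps_le d ys \<Longrightarrow> (xs \<noteq> [] \<Longrightarrow> ys \<noteq> [] \<Longrightarrow> hd ys - last xs \<le> d)
    \<Longrightarrow> gaps_le d (xs @ ys)"
proof (induction d xs rule: gaps_le.induct)
  case ("2_2" d a)
  then show ?case by (cases ys) auto
qed auto

lemma riemann_sum_append:
  "riemann_sum g x (xs @ [y]) + riemann_sum g x (y # ys) = riemann_sum g x (xs @ y # ys)"
proof (induction xs)
  case (Cons p xs)
  then show ?case by (cases xs) (auto simp: algebra_simps)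
qed simp

lemma riemann_sum_split:
  assumes "ts \<noteq> []"
  shows "riemann_sum g x (ls @ ts @ rs)
    = riemann_sum g x (ls @ [hd ts]) + riemann_sum g x ts + riemann_sum g x (last ts # rs)"
proof -
  have "riemann_sum g x (ts @ rs) = riemann_sum g x (butlast ts @ last ts # rs)"
    using assms by (metis append.assoc append_Cons append_Nil append_butlast_last_id)
  also have "\<dots> = riemann_sum g x (butlast ts @ [last ts]) + riemann_sum g x (last ts # rs)"
    by (rule riemann_sum_append[symmetric])
  finally have "riemann_sum g x (ts @ rs) = riemann_sum g x ts + riemann_sum g x (last ts # rs)"
    using assms by simp
  moreover have "riemann_sum g x (ls @ ts @ rs) = riemann_sum g x (ls @ [hd ts]) + riemann_sum g x (ts @ rs)"
    using assms riemann_sum_append[of g x ls "hd ts" "tl ts @ rs"] by (cases ts) simp_all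
  ultimately show ?thesis
    by (simp add: add.assoc)
qed

lemma riemann_sum_remove_point:
  "riemann_sum g x (ps @ [a, b, c] @ qs)
     = riemann_sum g x (ps @ [a, c] @ qs) + (g b - g a) *\<^sub>R (x c - x b)"
proof (induction ps)
  case (Cons p ps)
  then show ?case by (cases ps) (auto simp: algebra_simps)
qed (simp add: algebra_simps)

lemma riemann_sum_in_span: "riemann_sum g x q \<in> span (set (incr_list x q))"
proof (induction g x q rule: riemann_sum.induct)
  case (1 g x a b q)
  then have "riemann_sum g x (b # q) \<in> span (set (incr_list x (a # b # q)))"
    by (auto intro: span_mono[THEN subsetD, rotated])
  moreover have "g a *\<^sub>R (x b - x a) \<in> span (set (incr_list x (a # b # q)))"
    by (intro span_scale span_base) simp
  ultimately show ?case
    by (simp add: span_add)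
qed (auto simp: span_zero)

section \<open>The Young--Loeve estimate\<close>

lemma exists_short_double_gap:
  fixes q :: "real list"
  assumes "sorted q" "length q = m + 1" "2 \<le> m"
  shows "\<exists>i. i + 2 \<le> m \<and> (q!(i+2) - q!i) * (real m - 1) \<le> 2 * (q!m - q!0)"
proof (rule ccontr)
  assume "\<not> ?thesis"
  then have "\<not> (q!(i+2) - q!i) * (real m - 1) \<le> 2 * (q!m - q!0)" if "i < m - 1" for i
    using that by auto
  then have long: "2 * (q!m - q!0) / (real m - 1) < q!(Suc (Suc i)) - q!i" if "i < m - 1" for i
    using that assms(3) by (simp add: divide_less_eq not_le numeral_2_eq_2)
  have mono: "i \<le> j \<Longrightarrow> j \<le> m \<Longrightarrow> q!i \<le> q!j" for i j
    using assms by (simp add: sorted_nth_mono)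
  have "(\<Sum>i<m-1. 2 * (q!m - q!0) / (real m - 1)) < (\<Sum>i<m-1. q!(Suc (Suc i)) - q!i)"
    by (rule sum_strict_mono) (use long assms(3) in \<open>auto simp: lessThan_empty_iff\<close>)
  also have "\<dots> = (\<Sum>i<m-1. q!(Suc (Suc i)) - q!(Suc i)) + (\<Sum>i<m-1. q!(Suc i) - q!i)"
    by (simp add: sum.distrib[symmetric])
  also have "\<dots> = (q!(Suc (m-1)) - q!1) + (q!(m-1) - q!0)"
    by (simp add: sum_lessThan_telescope[of "\<lambda>i. q!(Suc i)"] sum_lessThan_telescope[of "\<lambda>i. q!i"])
  also have "\<dots> \<le> 2 * (q!m - q!0)"
    using mono[of 0 1] mono[of "m-1" m] assms(3) by simp
  finally show False
    using assms(3) by simp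
qed

definition young_bound :: "(real \<Rightarrow> real) \<Rightarrow> (real \<Rightarrow> 'a::real_normed_vector) \<Rightarrow> real \<Rightarrow> real \<Rightarrow> bool" where
  "young_bound g x K \<gamma> \<longleftrightarrow> (\<forall>s u v t. 0 \<le> s \<and> s \<le> u \<and> u \<le> t \<and> s \<le> v \<and> v \<le> t \<and> t \<le> 1 \<longrightarrow>
      norm ((g u - g s) *\<^sub>R (x t - x v)) \<le> K * (t - s) powr \<gamma>)"

text \<open>Young's argument: remove an interior point whose two neighbours are closest together.\<close>
lemma young_remove_point:
  assumes yb: "young_bound g x K \<gamma>" and K: "0 \<le> K" and \<gamma>: "0 < \<gamma>"
    and q: "sorted q" "length q = m + 2" "1 \<le> m" "set q \<subseteq> {0..1}"
  obtains q' where "sorted q'" "length q' = m + 1" "set q' \<subseteq> {0..1}" "hd q' = hd q" "last q' = last q"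
    and "norm (riemann_sum g x q - riemann_sum g x q')
      \<le> K * (last q - hd q) powr \<gamma> * (2 / real m) powr \<gamma>"
proof -
  have hdq: "hd q = q!0" and lastq: "last q = q!(Suc m)"
    using q(2) by (simp_all add: hd_conv_nth last_conv_nth flip: length_greater_0_conv)
  have mono: "i \<le> j \<Longrightarrow> j \<le> Suc m \<Longrightarrow> q!i \<le> q!j" for i j
    using q by (simp add: sorted_nth_mono)
  have "i \<le> Suc m \<Longrightarrow> q!i \<in> set q" for i
    using q(2) by simp
  then have range: "i \<le> Suc m \<Longrightarrow> q!i \<in> {0..1}" for i
    using q(4) by blast
  obtain i where i: "i + 2 \<le> Suc m"
    and short: "(q!(i+2) - q!i) * (real (Suc m) - 1) \<le> 2 * (q!(Suc m) - q!0)"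
    using exists_short_double_gap[OF q(1)] q(2,3) by auto
  define a b c where "a = q!i" and "b = q!(i+1)" and "c = q!(i+2)"
  define ps qs where "ps = take i q" and "qs = drop (i+3) q"
  have "drop i q = a # b # c # qs"
    using i q(2) by (simp add: Cons_nth_drop_Suc numeral_3_eq_3 a_def b_def c_def qs_def)
  then have qeq: "q = ps @ [a,b,c] @ qs"
    unfolding ps_def by (metis append_Cons append_Nil append_take_drop_id)
  show ?thesis
  proof (rule that[of "ps @ [a,c] @ qs"])
    show "sorted (ps @ [a,c] @ qs)" "length (ps @ [a,c] @ qs) = m + 1" "set (ps @ [a,c] @ qs) \<subseteq> {0..1}"
      using q qeq by (auto simp: sorted_append)
    have "hd (ps @ [a,c] @ qs) = hd (ps @ [a,b,c] @ qs)"
      by (cases ps) simp_all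
    moreover have "last (ps @ [a,c] @ qs) = last (ps @ [a,b,c] @ qs)"
      by (cases qs) simp_all
    ultimately show "hd (ps @ [a,c] @ qs) = hd q" "last (ps @ [a,c] @ qs) = last q"
      using qeq by simp_all
    have abc: "0 \<le> a" "a \<le> b" "b \<le> c" "c \<le> 1"
      using mono[of i "i+1"] mono[of "i+1" "i+2"] range[of i] range[of "i+2"] i
      unfolding a_def b_def c_def by auto
    have "c - a \<le> (last q - hd q) * (2 / real m)"
      using short q(3) hdq lastq unfolding a_def c_def by (simp add: field_simps)
    then have "(c - a) powr \<gamma> \<le> ((last q - hd q) * (2 / real m)) powr \<gamma>"
      using \<gamma> abc by (intro powr_mono2) auto
    also have "\<dots> = (last q - hd q) powr \<gamma> * (2 / real m) powr \<gamma>"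
      using mono[of 0 "Suc m"] hdq lastq by (intro powr_mult)
    finally have "K * (c - a) powr \<gamma> \<le> K * ((last q - hd q) powr \<gamma> * (2 / real m) powr \<gamma>)"
      using K by (rule mult_left_mono)
    moreover have "norm ((g b - g a) *\<^sub>R (x c - x b)) \<le> K * (c - a) powr \<gamma>"
      using yb abc unfolding young_bound_def by auto
    moreover have "riemann_sum g x q - riemann_sum g x (ps @ [a,c] @ qs) = (g b - g a) *\<^sub>R (x c - x b)"
      using riemann_sum_remove_point[of g x ps a b c qs] qeq by simp
    ultimately show "norm (riemann_sum g x q - riemann_sum g x (ps @ [a,c] @ qs))
        \<le> K * (last q - hd q) powr \<gamma> * (2 / real m) powr \<gamma>"
      by (simp add: mult.assoc)
  qed
qed

lemma young_loeve_partial_sum: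
  assumes yb: "young_bound g x K \<gamma>" and K: "0 \<le> K" and \<gamma>: "0 < \<gamma>"
  shows "sorted q \<Longrightarrow> length q = m + 1 \<Longrightarrow> set q \<subseteq> {0..1} \<Longrightarrow>
    norm (riemann_sum g x q - g (hd q) *\<^sub>R (x (last q) - x (hd q)))
      \<le> K * (last q - hd q) powr \<gamma> * (\<Sum>j\<in>{1..<m}. (2 / real j) powr \<gamma>)"
proof (induction m arbitrary: q)
  case 0
  then show ?case
    by (cases q) auto
next
  case (Suc m)
  show ?case
  proof (cases m)
    case 0
    then obtain a b where "q = [a, b]"
      using Suc.prems(2) by (metis Suc_eq_plus1 length_0_conv length_Suc_conv)
    then show ?thesis
      using 0 by simp
  next
    case (Suc m')
    obtain q' where q': "sorted q'" "length q' = m + 1" "set q' \<subseteq> {0..1}" "hd q' = hd q" "last q' = last q"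
      and removed: "norm (riemann_sum g x q - riemann_sum g x q')
        \<le> K * (last q - hd q) powr \<gamma> * (2 / real m) powr \<gamma>"
      using young_remove_point[OF yb K \<gamma>, of q m] Suc Suc.prems by auto
    have "norm (riemann_sum g x q - g (hd q) *\<^sub>R (x (last q) - x (hd q)))
        \<le> norm (riemann_sum g x q - riemann_sum g x q')
          + norm (riemann_sum g x q' - g (hd q) *\<^sub>R (x (last q) - x (hd q)))"
      by (rule norm_diff_triangle_le) (rule order_refl)+
    also have "\<dots> \<le> K * (last q - hd q) powr \<gamma> * (\<Sum>j\<in>{1..<Suc m}. (2 / real j) powr \<gamma>)"
      using Suc.IH[OF q'(1-3)] q'(4,5) removed Suc by (simp add: sum.atLeastLessThan_Suc algebra_simps)
    finally show ?thesis .
  qed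
qed

text \<open>The \<open>n = 0\<close> term vanishes since \<open>2 / 0 = 0\<close>.\<close>
definition young_loeve_const :: "real \<Rightarrow> real" where
  "young_loeve_const \<gamma> = (\<Sum>n. (2 / real n) powr \<gamma>)"

lemma summable_young_loeve: "1 < \<gamma> \<Longrightarrow> summable (\<lambda>n. (2 / real n) powr \<gamma>)"
proof -
  assume \<gamma>: "1 < \<gamma>"
  have "(2 / real n) powr \<gamma> = 2 powr \<gamma> * real n powr (- \<gamma>)" for n
    by (cases "n = 0") (simp_all add: powr_divide powr_minus_divide)
  moreover have "summable (\<lambda>n. real n powr (- \<gamma>))"
    using \<gamma> by (simp add: summable_real_powr_iff)
  ultimately show ?thesis
    by (simp add: summable_mult)
qed

lemma sum_le_young_loeve_const: "1 < \<gamma> \<Longrightarrow> (\<Sum>j\<in>{1..<m}. (2 / real j) powr \<gamma>) \<le> young_loeve_const \<gamma>"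
  unfolding young_loeve_const_def
  by (rule order_trans[OF sum_mono2[of "{..<m}"] sum_le_suminf[OF summable_young_loeve]]) auto

lemma young_loeve_const_nonneg: "1 < \<gamma> \<Longrightarrow> 0 \<le> young_loeve_const \<gamma>"
  using sum_le_young_loeve_const[of \<gamma> 0] by simp

lemma young_loeve:
  assumes yb: "young_bound g x K \<gamma>" and K: "0 \<le> K" and \<gamma>: "1 < \<gamma>"
    and q: "sorted q" "q \<noteq> []" "set q \<subseteq> {0..1}"
  shows "norm (riemann_sum g x q - g (hd q) *\<^sub>R (x (last q) - x (hd q)))
    \<le> K * young_loeve_const \<gamma> * (last q - hd q) powr \<gamma>"
proof -
  have "norm (riemann_sum g x q - g (hd q) *\<^sub>R (x (last q) - x (hd q)))
      \<le> K * (last q - hd q) powr \<gamma> * (\<Sum>j\<in>{1..<length q - 1}. (2 / real j) powr \<gamma>)"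
    using young_loeve_partial_sum[OF yb K, of q "length q - 1"] q \<gamma> by simp
  also have "\<dots> \<le> K * (last q - hd q) powr \<gamma> * young_loeve_const \<gamma>"
    by (rule mult_left_mono[OF sum_le_young_loeve_const]) (use \<gamma> K in auto)
  finally show ?thesis
    by (simp add: algebra_simps)
qed

lemma riemann_sum_refinement:
  assumes yb: "young_bound g x K \<gamma>" and K: "0 \<le> K" and \<gamma>: "1 < \<gamma>"
  shows "sorted P \<Longrightarrow> P \<noteq> [] \<Longrightarrow> sorted R \<Longrightarrow> set P \<subseteq> set R \<Longrightarrow> hd R = hd P \<Longrightarrow>
    last R = last P \<Longrightarrow> set R \<subseteq> {0..1} \<Longrightarrow>
    norm (riemann_sum g x R - riemann_sum g x P) \<le> K * young_loeve_const \<gamma> * gap_powr_sum \<gamma> P"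
proof (induction P arbitrary: R rule: induct_list012)
  case (2 a)
  then have "R \<noteq> []"
    by auto
  with 2 have "norm (riemann_sum g x R - g (hd R) *\<^sub>R (x (last R) - x (hd R))) \<le> 0"
    using young_loeve[OF yb K \<gamma>, of R] \<gamma> by auto
  then show ?case
    using 2 by simp
next
  case (3 a b P)
  have "b \<in> set R"
    using "3.prems"(4) by auto
  then obtain R1 R2 where R: "R = R1 @ b # R2" and "b \<notin> set R1"
    by (metis split_list_first)
  moreover have "\<forall>y\<in>set R1. y \<le> b"
    using "3.prems"(3) R by (simp add: sorted_append)
  ultimately have R1_less: "\<forall>y\<in>set R1. y < b"
    by (metis order.not_eq_order_implies_strict)
  have hd1: "hd (R1 @ [b]) = a"
    using "3.prems"(5) R by (cases R1) auto
  have "norm (riemann_sum g x (R1 @ [b]) - g a *\<^sub>R (x b - x a)) \<le> K * young_loeve_const \<gamma> * (b - a) powr \<gamma>"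
    using young_loeve[OF yb K \<gamma>, of "R1 @ [b]"] "3.prems"(3,7) R hd1 by (simp add: sorted_append)
  moreover have "norm (riemann_sum g x (b # R2) - riemann_sum g x (b # P))
      \<le> K * young_loeve_const \<gamma> * gap_powr_sum \<gamma> (b # P)"
  proof (rule "3.IH"(2))
    show "set (b # P) \<subseteq> set (b # R2)"
      using "3.prems"(1,4) R R1_less by fastforce
  qed (use "3.prems" R in \<open>auto simp: sorted_append\<close>)
  ultimately have "norm ((riemann_sum g x (R1 @ [b]) - g a *\<^sub>R (x b - x a))
      + (riemann_sum g x (b # R2) - riemann_sum g x (b # P)))
      \<le> K * young_loeve_const \<gamma> * (b - a) powr \<gamma> + K * young_loeve_const \<gamma> * gap_powr_sum \<gamma> (b # P)"
    by (meson add_mono norm_triangle_ineq order_trans)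
  moreover have "riemann_sum g x R = riemann_sum g x (R1 @ [b]) + riemann_sum g x (b # R2)"
    unfolding R by (rule riemann_sum_append[symmetric])
  ultimately show ?case
    by (simp add: algebra_simps)
qed simp

lemma gap_powr_sum_le:
  assumes d: "0 \<le> d" and \<gamma>: "1 \<le> \<gamma>"
  shows "sorted P \<Longrightarrow> gaps_le d P \<Longrightarrow> P \<noteq> [] \<Longrightarrow> gap_powr_sum \<gamma> P \<le> d powr (\<gamma> - 1) * (last P - hd P)"
proof (induction P rule: induct_list012)
  case (3 a b q)
  have ab: "0 \<le> b - a" "b - a \<le> d"
    using "3.prems" by auto
  have "(b - a) powr \<gamma> \<le> d powr (\<gamma> - 1) * (b - a)"
  proof (cases "b = a")
    case False
    then have "(b - a) powr \<gamma> = (b - a) powr (\<gamma> - 1) * (b - a)"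
      using ab by (simp add: powr_diff)
    also have "\<dots> \<le> d powr (\<gamma> - 1) * (b - a)"
      using \<gamma> ab by (intro mult_right_mono powr_mono2) auto
    finally show ?thesis .
  qed simp
  moreover have "gap_powr_sum \<gamma> (b # q) \<le> d powr (\<gamma> - 1) * (last (b # q) - b)"
    using "3.IH"(2) "3.prems" by simp
  ultimately show ?case
    by (simp add: algebra_simps)
qed auto

lemma riemann_sum_refinement_partition01:
  assumes yb: "young_bound g x K \<gamma>" and K: "0 \<le> K" and \<gamma>: "1 < \<gamma>" and d: "0 \<le> d"
    and P: "partition01 P" "gaps_le d P" and R: "partition01 R" "set P \<subseteq> set R"
  shows "norm (riemann_sum g x R - riemann_sum g x P) \<le> K * young_loeve_const \<gamma> * d powr (\<gamma> - 1)"
proof -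
  have "norm (riemann_sum g x R - riemann_sum g x P) \<le> K * young_loeve_const \<gamma> * gap_powr_sum \<gamma> P"
    by (rule riemann_sum_refinement[OF yb K \<gamma>]) (use P R in \<open>auto simp: partition01_def\<close>)
  also have "\<dots> \<le> K * young_loeve_const \<gamma> * (d powr (\<gamma> - 1) * (last P - hd P))"
    using P \<gamma> d K young_loeve_const_nonneg[OF \<gamma>]
    by (intro mult_left_mono gap_powr_sum_le) (auto simp: partition01_def)
  finally show ?thesis
    using P by (simp add: partition01_def)
qed

lemma partition01_sort_append:
  assumes P: "partition01 P" and Q: "partition01 Q"
  shows "partition01 (sort (P @ Q))"
proof -
  define R where "R = sort (P @ Q)"
  have R: "sorted R" "set R = set P \<union> set Q"
    by (simp_all add: R_def)
  then have "R \<noteq> []" "set R \<subseteq> {0..1}"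
    using P Q by (auto simp: partition01_def)
  have "0 \<in> set R" "1 \<in> set R"
    using P R(2) hd_in_set[of P] last_in_set[of P] by (auto simp: partition01_def)
  then have "hd R \<le> 0" "1 \<le> last R"
    using sorted_hd_le_le_last[OF R(1)] by auto
  moreover have "hd R \<in> {0..1}" "last R \<in> {0..1}"
    using hd_in_set last_in_set \<open>R \<noteq> []\<close> \<open>set R \<subseteq> {0..1}\<close> by blast+
  ultimately show ?thesis
    using R \<open>R \<noteq> []\<close> \<open>set R \<subseteq> {0..1}\<close> by (auto simp: partition01_def R_def[symmetric])
qed

text \<open>Two fine partitions are compared through their common refinement.\<close>
lemma norm_riemann_sum_diff_le:
  assumes yb: "young_bound g x K \<gamma>" and K: "0 \<le> K" and \<gamma>: "1 < \<gamma>" and d: "0 \<le> d"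
    and P: "partition01 P" "gaps_le d P" and Q: "partition01 Q" "gaps_le d Q"
  shows "norm (riemann_sum g x P - riemann_sum g x Q) \<le> 2 * K * young_loeve_const \<gamma> * d powr (\<gamma> - 1)"
proof -
  define R where "R = sort (P @ Q)"
  have "partition01 R" "set P \<subseteq> set R" "set Q \<subseteq> set R"
    using partition01_sort_append[OF P(1) Q(1)] by (auto simp: R_def)
  then have "norm (riemann_sum g x P - riemann_sum g x R) \<le> K * young_loeve_const \<gamma> * d powr (\<gamma> - 1)"
    "norm (riemann_sum g x R - riemann_sum g x Q) \<le> K * young_loeve_const \<gamma> * d powr (\<gamma> - 1)"
    using riemann_sum_refinement_partition01[OF yb K \<gamma> d P, of R]
      riemann_sum_refinement_partition01[OF yb K \<gamma> d Q, of R]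
    by (simp_all add: norm_minus_commute)
  then have "norm (riemann_sum g x P - riemann_sum g x Q)
      \<le> K * young_loeve_const \<gamma> * d powr (\<gamma> - 1) + K * young_loeve_const \<gamma> * d powr (\<gamma> - 1)"
    by (rule norm_diff_triangle_le)
  then show ?thesis
    by simp
qed

section \<open>Uniform grids and the existence of the limit\<close>

definition grid :: "real \<Rightarrow> real \<Rightarrow> nat \<Rightarrow> nat \<Rightarrow> real" where
  "grid a b k j = a + (b - a) * real j / real k"

text \<open>The uniform \<open>k\<close>-grid of \<open>[a, b]\<close>, completed to a partition of \<open>[0, 1]\<close> by the uniform
  \<open>k\<close>-grids of \<open>[0, a]\<close> and \<open>[b, 1]\<close>; the outer grids are dropped when they degenerate, so
  that all outer points lie in \<open>[0, a)\<close> and \<open>(b, 1]\<close>.\<close>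
definition adapted_partition :: "real \<Rightarrow> real \<Rightarrow> nat \<Rightarrow> real list" where
  "adapted_partition a b k =
     (if a = 0 then [] else map (grid 0 a k) [0..<k]) @ map (grid a b k) [0..<Suc k] @
     (if b = 1 then [] else map (grid b 1 k) [1..<Suc k])"

lemma grid_0 [simp]: "grid a b k 0 = a"
  by (simp add: grid_def)

lemma grid_last: "0 < k \<Longrightarrow> grid a b k k = b"
  by (simp add: grid_def)

lemma grid_mono: "a \<le> b \<Longrightarrow> i \<le> j \<Longrightarrow> grid a b k i \<le> grid a b k j"
  by (simp add: grid_def divide_right_mono mult_left_mono)

lemma grid_strict_mono: "a < b \<Longrightarrow> 0 < k \<Longrightarrow> i < j \<Longrightarrow> grid a b k i < grid a b k j"
  by (simp add: grid_def divide_strict_right_mono)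

lemma grid_bounds:
  assumes "a \<le> b" "j \<le> k" "0 < k"
  shows "grid a b k j \<in> {a..b}"
proof -
  have "(b - a) * real j \<le> (b - a) * real k"
    using assms by (intro mult_left_mono) auto
  then have "(b - a) * real j / real k \<le> b - a"
    using assms by (simp add: pos_divide_le_eq)
  then show ?thesis
    using assms by (simp add: grid_def)
qed

lemma sorted_grid: "a \<le> b \<Longrightarrow> sorted (map (grid a b k) [m..<n])"
  unfolding sorted_map by (rule sorted_wrt_mono_rel[OF _ sorted_upt]) (simp add: grid_mono)

lemma strict_sorted_grid: "a < b \<Longrightarrow> 0 < k \<Longrightarrow> sorted_wrt (<) (map (grid a b k) [m..<n])"
  unfolding sorted_wrt_map by (rule sorted_wrt_mono_rel[OF _ sorted_wrt_upt]) (simp add: grid_strict_mono)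

lemma grid_Suc_diff: "grid a b k (Suc j) - grid a b k j = (b - a) / real k"
  by (simp add: grid_def diff_divide_distrib[symmetric] algebra_simps)

lemma gaps_le_grid:
  assumes "a \<le> b" "b - a \<le> 1" "0 < k"
  shows "gaps_le (1 / real k) (map (grid a b k) [m..<n])"
  using assms by (auto simp: gaps_le_iff_nth grid_Suc_diff divide_right_mono)

lemma adapted_partition_parts:
  assumes ab: "0 \<le> a" "a \<le> b" "b \<le> 1" and k: "0 < k"
  obtains L M R where "adapted_partition a b k = L @ M @ R"
    and "set L \<subseteq> {0..<a}" "set M \<subseteq> {a..b}" "set R \<subseteq> {b<..1}"
    and "sorted L" "sorted M" "sorted R" "a < b \<longrightarrow> sorted_wrt (<) M"
    and "gaps_le (1 / real k) L" "gaps_le (1 / real k) M" "gaps_le (1 / real k) R"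
    and "length M = Suc k" "hd M = a" "last M = b" "hd (L @ M) = 0"
    and "L = [] \<or> a - last L \<le> 1 / real k" "R = [] \<or> hd R - b \<le> 1 / real k"
proof
  define L where "L = (if a = 0 then [] else map (grid 0 a k) [0..<k])"
  define M where "M = map (grid a b k) [0..<Suc k]"
  define R where "R = (if b = 1 then [] else map (grid b 1 k) [1..<Suc k])"
  show "adapted_partition a b k = L @ M @ R"
    by (simp add: adapted_partition_def L_def M_def R_def)
  have "grid 0 a k j \<in> {0..<a}" if "a \<noteq> 0" "j < k" for j
  proof -
    have "grid 0 a k j < grid 0 a k k"
      using that ab k by (intro grid_strict_mono) auto
    then show ?thesis
      using grid_bounds[of 0 a j k] that ab k by (simp add: grid_last)
  qed
  then show "set L \<subseteq> {0..<a}"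
    by (auto simp: L_def)
  show "set M \<subseteq> {a..b}"
    using grid_bounds[of a b _ k] ab k by (auto simp: M_def simp del: upt_Suc)
  have "grid b 1 k j \<in> {b<..1}" if "b \<noteq> 1" "0 < j" "j \<le> k" for j
    using grid_strict_mono[of b 1 k 0 j] grid_bounds[of b 1 j k] that ab k by simp
  then show "set R \<subseteq> {b<..1}"
    by (auto simp: R_def simp del: upt_Suc)
  show "sorted L" "sorted M" "sorted R"
    using ab by (simp_all add: L_def M_def R_def sorted_grid del: upt_Suc)
  show "a < b \<longrightarrow> sorted_wrt (<) M"
    using k by (simp add: M_def strict_sorted_grid del: upt_Suc)
  show "gaps_le (1 / real k) L" "gaps_le (1 / real k) M" "gaps_le (1 / real k) R"
    using ab k by (simp_all add: L_def M_def R_def gaps_le_grid del: upt_Suc)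
  show "length M = Suc k" "hd M = a" "last M = b"
    using k by (simp_all add: M_def hd_map last_map grid_last del: upt_Suc)
  show "hd (L @ M) = 0"
    by (simp add: L_def M_def hd_map k del: upt_Suc)
  have "a - grid 0 a k (k - 1) = a / real k"
    using grid_Suc_diff[of 0 a k "k - 1"] k by (simp add: grid_last)
  then show "L = [] \<or> a - last L \<le> 1 / real k"
    using ab k by (auto simp: L_def last_map divide_right_mono)
  have "grid b 1 k 1 - b = (1 - b) / real k"
    using grid_Suc_diff[of b 1 k 0] by simp
  then show "R = [] \<or> hd R - b \<le> 1 / real k"
    using ab k by (auto simp: R_def hd_map divide_right_mono simp del: upt_Suc)
qed

lemma partition01_adapted_partition:
  assumes "0 \<le> a" "a \<le> b" "b \<le> 1" and "0 < k"
  shows "partition01 (adapted_partition a b k)"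
proof -
  obtain L M R where q: "adapted_partition a b k = L @ M @ R"
    and sets: "set L \<subseteq> {0..<a}" "set M \<subseteq> {a..b}" "set R \<subseteq> {b<..1}"
    and sorted: "sorted L" "sorted M" "sorted R" "a < b \<longrightarrow> sorted_wrt (<) M"
    and "gaps_le (1 / real k) L" "gaps_le (1 / real k) M" "gaps_le (1 / real k) R"
    and M: "length M = Suc k" "hd M = a" "last M = b" "hd (L @ M) = 0"
    and "L = [] \<or> a - last L \<le> 1 / real k" "R = [] \<or> hd R - b \<le> 1 / real k"
    by (rule adapted_partition_parts[OF assms])
  have "M \<noteq> []"
    using M(1) by auto
  have "\<forall>x\<in>set L. \<forall>y\<in>set (M @ R). x \<le> y" "\<forall>x\<in>set M. \<forall>y\<in>set R. x \<le> y"
    using sets assms(2) by (auto dest!: subsetD)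
  then have "sorted (adapted_partition a b k)" "set (adapted_partition a b k) \<subseteq> {0..1}"
    unfolding q using sets sorted assms by (auto simp: sorted_append)
  moreover have "hd (adapted_partition a b k) = 0" "last (adapted_partition a b k) = 1"
    using assms by (simp_all add: adapted_partition_def hd_map last_map grid_last del: upt_Suc)
  ultimately show ?thesis
    using \<open>M \<noteq> []\<close> by (auto simp: partition01_def q)
qed

lemma gaps_le_adapted_partition:
  assumes "0 \<le> a" "a \<le> b" "b \<le> 1" and "0 < k"
  shows "gaps_le (1 / real k) (adapted_partition a b k)"
proof -
  obtain L M R where q: "adapted_partition a b k = L @ M @ R"
    and "set L \<subseteq> {0..<a}" "set M \<subseteq> {a..b}" "set R \<subseteq> {b<..1}"
    and "sorted L" "sorted M" "sorted R" "a < b \<longrightarrow> sorted_wrt (<) M"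
    and gaps: "gaps_le (1 / real k) L" "gaps_le (1 / real k) M" "gaps_le (1 / real k) R"
    and M: "length M = Suc k" "hd M = a" "last M = b" "hd (L @ M) = 0"
    and joints: "L = [] \<or> a - last L \<le> 1 / real k" "R = [] \<or> hd R - b \<le> 1 / real k"
    by (rule adapted_partition_parts[OF assms])
  have "M \<noteq> []"
    using M(1) by auto
  then show ?thesis
    unfolding q using gaps M joints by (intro gaps_le_append) auto
qed

lemma exists_powr_less:
  fixes C \<gamma> e :: real
  assumes C: "0 < C" and \<gamma>: "1 < \<gamma>" and e: "0 < e"
  shows "\<exists>d>0. C * d powr (\<gamma> - 1) < e"
proof -
  define d where "d = (e / (2 * C)) powr (1 / (\<gamma> - 1))"
  have "C * d powr (\<gamma> - 1) = e / 2"
    unfolding d_def powr_powr using \<gamma> C e by simp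
  moreover have "d > 0"
    unfolding d_def using C e by simp
  ultimately show ?thesis
    using e by (intro exI[of _ d]) simp
qed

lemma exists_gaps_le_adapted_partition:
  assumes "0 \<le> a" "a \<le> b" "b \<le> 1" and "0 < \<delta>"
  obtains N where "\<And>k. N \<le> k \<Longrightarrow> gaps_le \<delta> (adapted_partition a b (Suc k))"
proof -
  obtain N where N: "inverse (real (Suc N)) < \<delta>"
    using reals_Archimedean[OF \<open>0 < \<delta>\<close>] by auto
  have "gaps_le \<delta> (adapted_partition a b (Suc k))" if "N \<le> k" for k
  proof (rule gaps_le_mono[OF gaps_le_adapted_partition])
    have "inverse (real (Suc k)) \<le> inverse (real (Suc N))"
      using that by (simp add: le_imp_inverse_le)
    then show "1 / real (Suc k) \<le> \<delta>"
      using N by (simp add: inverse_eq_divide)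
  qed (use assms in auto)
  then show ?thesis
    using that by blast
qed

lemma riemann_sum_limit_imp_LIMSEQ:
  assumes "riemann_sum_limit g x L" and "0 \<le> a" "a \<le> b" "b \<le> 1"
  shows "(\<lambda>k. riemann_sum g x (adapted_partition a b (Suc k))) \<longlonglongrightarrow> L"
proof (rule LIMSEQ_I)
  fix r :: real
  assume "0 < r"
  then obtain \<delta> where "\<delta> > 0"
    and \<delta>: "\<And>q. partition01 q \<Longrightarrow> gaps_le \<delta> q \<Longrightarrow> norm (riemann_sum g x q - L) < r"
    using assms(1) unfolding riemann_sum_limit_def by blast
  obtain N where "\<And>k. N \<le> k \<Longrightarrow> gaps_le \<delta> (adapted_partition a b (Suc k))"
    using exists_gaps_le_adapted_partition[OF assms(2-4) \<open>\<delta> > 0\<close>] by blast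
  then show "\<exists>N. \<forall>k\<ge>N. norm (riemann_sum g x (adapted_partition a b (Suc k)) - L) < r"
    using \<delta> partition01_adapted_partition assms(2-4) by blast
qed

lemma riemann_sum_cauchy_criterion:
  assumes yb: "young_bound g x K \<gamma>" and K: "0 \<le> K" and \<gamma>: "1 < \<gamma>" and "0 < e"
  shows "\<exists>d>0. \<forall>P Q. partition01 P \<and> gaps_le d P \<and> partition01 Q \<and> gaps_le d Q \<longrightarrow>
    norm (riemann_sum g x P - riemann_sum g x Q) < e"
proof -
  define C where "C = 2 * K * young_loeve_const \<gamma> + 1"
  have "0 \<le> K * young_loeve_const \<gamma>"
    using K young_loeve_const_nonneg[OF \<gamma>] by simp
  then have "0 < C"
    by (simp add: C_def)
  then obtain d where "d > 0" and d: "C * d powr (\<gamma> - 1) < e"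
    using exists_powr_less[OF _ \<gamma> \<open>0 < e\<close>] by blast
  have "norm (riemann_sum g x P - riemann_sum g x Q) < e"
    if "partition01 P" "gaps_le d P" "partition01 Q" "gaps_le d Q" for P Q
  proof -
    have "norm (riemann_sum g x P - riemann_sum g x Q) \<le> 2 * K * young_loeve_const \<gamma> * d powr (\<gamma> - 1)"
      using norm_riemann_sum_diff_le[OF yb K \<gamma>] \<open>d > 0\<close> that by simp
    also have "\<dots> \<le> C * d powr (\<gamma> - 1)"
      by (simp add: C_def algebra_simps)
    finally show ?thesis
      using d by simp
  qed
  then show ?thesis
    using \<open>d > 0\<close> by blast
qed

lemma riemann_sum_limit_exists_if_cauchy:
  fixes x :: "real \<Rightarrow> 'a::{real_normed_vector, complete_space}"
  assumes cauchy: "\<And>e. 0 < e \<Longrightarrow> \<exists>d>0. \<forall>P Q. partition01 P \<and> gaps_le d P \<and> partition01 Q \<and> gaps_le d Q \<longrightarrow>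
    norm (riemann_sum g x P - riemann_sum g x Q) < e"
  shows "\<exists>L. riemann_sum_limit g x L"
proof -
  define s where "s k = riemann_sum g x (adapted_partition 0 1 (Suc k))" for k
  have "Cauchy s"
  proof (rule metric_CauchyI)
    fix e :: real
    assume "0 < e"
    then obtain d where "d > 0" and d: "\<forall>P Q. partition01 P \<and> gaps_le d P \<and> partition01 Q \<and> gaps_le d Q \<longrightarrow>
      norm (riemann_sum g x P - riemann_sum g x Q) < e"
      using cauchy by blast
    then obtain N where "\<And>k. N \<le> k \<Longrightarrow> gaps_le d (adapted_partition 0 1 (Suc k))"
      using exists_gaps_le_adapted_partition[of 0 1 d] by auto
    then have "dist (s m) (s n) < e" if "N \<le> m" "N \<le> n" for m n
      using d partition01_adapted_partition[of 0 1] that by (simp add: s_def dist_norm)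
    then show "\<exists>N. \<forall>m\<ge>N. \<forall>n\<ge>N. dist (s m) (s n) < e"
      by blast
  qed
  then obtain L where L: "s \<longlonglongrightarrow> L"
    using Cauchy_convergent_iff convergent_def by blast
  have "\<exists>\<delta>>0. \<forall>q. partition01 q \<and> gaps_le \<delta> q \<longrightarrow> norm (riemann_sum g x q - L) < e" if "0 < e" for e
  proof -
    obtain d where "d > 0" and d: "\<forall>P Q. partition01 P \<and> gaps_le d P \<and> partition01 Q \<and> gaps_le d Q \<longrightarrow>
      norm (riemann_sum g x P - riemann_sum g x Q) < e / 2"
      using cauchy[of "e / 2"] \<open>0 < e\<close> by auto
    obtain N1 where N1: "\<And>k. N1 \<le> k \<Longrightarrow> norm (s k - L) < e / 2"
      using LIMSEQ_D[OF L, of "e / 2"] \<open>0 < e\<close> by auto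
    obtain N2 where N2: "\<And>k. N2 \<le> k \<Longrightarrow> gaps_le d (adapted_partition 0 1 (Suc k))"
      using exists_gaps_le_adapted_partition[of 0 1 d] \<open>d > 0\<close> by auto
    define k where "k = max N1 N2"
    have "norm (riemann_sum g x q - s k) < e / 2" if "partition01 q" "gaps_le d q" for q
      using d N2[of k] partition01_adapted_partition[of 0 1] that by (simp add: s_def k_def)
    then have "norm (riemann_sum g x q - L) < e" if "partition01 q" "gaps_le d q" for q
      using N1[of k] norm_diff_triangle_less[of "riemann_sum g x q" "s k" "e / 2" L "e / 2"] that
      by (simp add: k_def)
    then show ?thesis
      using \<open>d > 0\<close> by blast
  qed
  then show ?thesis
    unfolding riemann_sum_limit_def by blast
qed

lemma riemann_sum_limit_exists:
  fixes x :: "real \<Rightarrow> 'a::{real_normed_vector, complete_space}"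
  assumes "young_bound g x K \<gamma>" and "0 \<le> K" and "1 < \<gamma>"
  shows "\<exists>L. riemann_sum_limit g x L"
  by (rule riemann_sum_limit_exists_if_cauchy) (rule riemann_sum_cauchy_criterion[OF assms])

section \<open>Hoelder paths and the Young integral\<close>

lemma holder_onE:
  assumes "holder_on \<tau> g"
  obtains K where "0 \<le> K" "\<And>s t. s \<in> {0..1} \<Longrightarrow> t \<in> {0..1} \<Longrightarrow> \<bar>g t - g s\<bar> \<le> K * \<bar>t - s\<bar> powr \<tau>"
proof -
  obtain K where K: "\<forall>s\<in>{0..1}. \<forall>t\<in>{0..1}. \<bar>g t - g s\<bar> \<le> K * \<bar>t - s\<bar> powr \<tau>"
    using assms unfolding holder_on_def by auto
  have "\<bar>g t - g s\<bar> \<le> max K 0 * \<bar>t - s\<bar> powr \<tau>" if "s \<in> {0..1}" "t \<in> {0..1}" for s t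
    using K that mult_right_mono[of K "max K 0" "\<bar>t - s\<bar> powr \<tau>"] by fastforce
  then show ?thesis
    using that[of "max K 0"] by auto
qed

lemma holder_young_bound:
  fixes x :: "real \<Rightarrow> 'a::real_normed_vector"
  assumes g: "\<And>s t. s \<in> {0..1} \<Longrightarrow> t \<in> {0..1} \<Longrightarrow> \<bar>g t - g s\<bar> \<le> Kg * \<bar>t - s\<bar> powr \<tau>"
    and x: "\<And>s t. s \<in> {0..1} \<Longrightarrow> t \<in> {0..1} \<Longrightarrow> norm (x t - x s) \<le> Kx * \<bar>t - s\<bar> powr \<rho>"
    and "0 \<le> \<tau>" "0 \<le> \<rho>" "0 \<le> Kg" "0 \<le> Kx"
  shows "young_bound g x (Kg * Kx) (\<tau> + \<rho>)"
  unfolding young_bound_def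
proof (intro allI impI)
  fix s u v t :: real
  assume H: "0 \<le> s \<and> s \<le> u \<and> u \<le> t \<and> s \<le> v \<and> v \<le> t \<and> t \<le> 1"
  have "\<bar>g u - g s\<bar> \<le> Kg * \<bar>u - s\<bar> powr \<tau>"
    using g[of s u] H by auto
  also have "\<dots> \<le> Kg * (t - s) powr \<tau>"
    using H assms by (intro mult_left_mono powr_mono2) auto
  finally have gu: "\<bar>g u - g s\<bar> \<le> Kg * (t - s) powr \<tau>" .
  have "norm (x t - x v) \<le> Kx * \<bar>t - v\<bar> powr \<rho>"
    using x[of v t] H by auto
  also have "\<dots> \<le> Kx * (t - s) powr \<rho>"
    using H assms by (intro mult_left_mono powr_mono2) auto
  finally have xt: "norm (x t - x v) \<le> Kx * (t - s) powr \<rho>" .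
  have "norm ((g u - g s) *\<^sub>R (x t - x v)) \<le> (Kg * (t - s) powr \<tau>) * (Kx * (t - s) powr \<rho>)"
    unfolding norm_scaleR using gu xt assms by (intro mult_mono) auto
  also have "\<dots> = Kg * Kx * (t - s) powr (\<tau> + \<rho>)"
    using H by (cases "t = s") (simp_all add: powr_add)
  finally show "norm ((g u - g s) *\<^sub>R (x t - x v)) \<le> Kg * Kx * (t - s) powr (\<tau> + \<rho>)" .
qed

lemma young_bound_holder:
  fixes x :: "real \<Rightarrow> 'a::real_normed_vector"
  assumes "holder_on \<tau> g"
    and x: "\<And>s t. s \<in> {0..1} \<Longrightarrow> t \<in> {0..1} \<Longrightarrow> norm (x t - x s) \<le> Kx * \<bar>t - s\<bar> powr \<rho>"
    and "0 \<le> Kx" "0 \<le> \<tau>" "0 \<le> \<rho>"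
  obtains K where "0 \<le> K" "young_bound g x K (\<tau> + \<rho>)"
proof -
  obtain Kg where "0 \<le> Kg"
    and "\<And>s t. s \<in> {0..1} \<Longrightarrow> t \<in> {0..1} \<Longrightarrow> \<bar>g t - g s\<bar> \<le> Kg * \<bar>t - s\<bar> powr \<tau>"
    using holder_onE[OF assms(1)] by blast
  then have "young_bound g x (Kg * Kx) (\<tau> + \<rho>)"
    using assms by (intro holder_young_bound) auto
  then show ?thesis
    using that \<open>0 \<le> Kg\<close> \<open>0 \<le> Kx\<close> by (metis mult_nonneg_nonneg)
qed

lemma riemann_sum_limit_exists_holder:
  fixes x :: "real \<Rightarrow> 'a::{real_normed_vector, complete_space}"
  assumes "holder_on \<tau> g"
    and "\<And>s t. s \<in> {0..1} \<Longrightarrow> t \<in> {0..1} \<Longrightarrow> norm (x t - x s) \<le> Kx * \<bar>t - s\<bar> powr \<rho>"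
    and "0 \<le> Kx" "0 \<le> \<tau>" "0 \<le> \<rho>" "1 < \<tau> + \<rho>"
  shows "\<exists>L. riemann_sum_limit g x L"
  using young_bound_holder[OF assms(1-5)] riemann_sum_limit_exists assms(6) by metis

lemma tagged_partition01_mono:
  assumes "tagged_partition01 N p \<xi>" "i \<le> j" "j \<le> N"
  shows "p i \<le> p j"
  using assms(2,3)
proof (induction j)
  case (Suc j)
  show ?case
  proof (cases "i = Suc j")
    case False
    then have "p i \<le> p j"
      using Suc by simp
    moreover have "p j < p (Suc j)"
      using assms(1) Suc.prems unfolding tagged_partition01_def by auto
    ultimately show ?thesis
      by simp
  qed simp
qed simp

lemma tagged_partition01_points:
  assumes P: "tagged_partition01 N p \<xi>"
  shows "partition01 (map p [0..<Suc N])" "gaps_le (mesh N p) (map p [0..<Suc N])"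
proof -
  have N: "0 < N" "p 0 = 0" "p N = 1"
    using P unfolding tagged_partition01_def by auto
  have "sorted (map p [0..<Suc N])"
    unfolding sorted_iff_nth_mono using tagged_partition01_mono[OF P] by (simp del: upt_Suc)
  moreover have "set (map p [0..<Suc N]) \<subseteq> {0..1}"
    using tagged_partition01_mono[OF P, of 0] tagged_partition01_mono[OF P, of _ N] N
    by (auto simp del: upt_Suc)
  ultimately show "partition01 (map p [0..<Suc N])"
    using N by (simp add: partition01_def hd_map last_map del: upt_Suc)
  show "gaps_le (mesh N p) (map p [0..<Suc N])"
    unfolding gaps_le_iff_nth mesh_def by (auto simp del: upt_Suc intro!: Max_ge)
qed

lemma mesh_pos:
  assumes "tagged_partition01 N p \<xi>"
  shows "0 < mesh N p"
proof -
  have "0 < N" "p 0 < p 1"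
    using assms unfolding tagged_partition01_def by auto
  moreover have "p 1 - p 0 \<le> mesh N p"
    unfolding mesh_def by (rule Max_ge) (use \<open>0 < N\<close> in auto)
  ultimately show ?thesis
    by simp
qed

lemma tagged_sum_riemann_sum_dist:
  assumes yb: "young_bound g x K \<gamma>" and K: "0 \<le> K" and \<gamma>: "1 < \<gamma>" and P: "tagged_partition01 N p \<xi>"
  shows "norm ((\<Sum>i<N. g (\<xi> i) *\<^sub>R (x (p (Suc i)) - x (p i))) - riemann_sum g x (map p [0..<Suc N]))
    \<le> K * mesh N p powr (\<gamma> - 1)"
proof -
  note points = tagged_partition01_points[OF P]
  have "norm ((\<Sum>i<N. g (\<xi> i) *\<^sub>R (x (p (Suc i)) - x (p i))) - riemann_sum g x (map p [0..<Suc N]))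
     = norm (\<Sum>i<N. (g (\<xi> i) - g (p i)) *\<^sub>R (x (p (Suc i)) - x (p i)))"
    by (simp add: riemann_sum_conv_sum sum_subtractf[symmetric] scaleR_diff_left del: upt_Suc)
  also have "\<dots> \<le> (\<Sum>i<N. norm ((g (\<xi> i) - g (p i)) *\<^sub>R (x (p (Suc i)) - x (p i))))"
    by (rule norm_sum)
  also have "\<dots> \<le> (\<Sum>i<N. K * (p (Suc i) - p i) powr \<gamma>)"
  proof (rule sum_mono)
    fix i
    assume "i \<in> {..<N}"
    then have "0 \<le> p i" "p i \<le> \<xi> i" "\<xi> i \<le> p (Suc i)" "p (Suc i) \<le> 1"
      using tagged_partition01_mono[OF P, of 0 i] tagged_partition01_mono[OF P, of "Suc i" N] P
      unfolding tagged_partition01_def by auto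
    then show "norm ((g (\<xi> i) - g (p i)) *\<^sub>R (x (p (Suc i)) - x (p i))) \<le> K * (p (Suc i) - p i) powr \<gamma>"
      using yb unfolding young_bound_def by auto
  qed
  also have "\<dots> = K * gap_powr_sum \<gamma> (map p [0..<Suc N])"
    by (simp add: gap_powr_sum_conv_sum sum_distrib_left del: upt_Suc)
  also have "\<dots> \<le> K * (mesh N p powr (\<gamma> - 1) * (last (map p [0..<Suc N]) - hd (map p [0..<Suc N])))"
    using points \<gamma> K mesh_pos[OF P]
    by (intro mult_left_mono gap_powr_sum_le) (auto simp: partition01_def)
  also have "\<dots> = K * mesh N p powr (\<gamma> - 1)"
    using points by (simp add: partition01_def del: upt_Suc)
  finally show ?thesis .
qed

lemma young_has_integral_if_riemann_sum_limit:
  fixes x :: "real \<Rightarrow> real"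
  assumes yb: "young_bound g x K \<gamma>" and K: "0 \<le> K" and \<gamma>: "1 < \<gamma>" and L: "riemann_sum_limit g x L"
  shows "young_has_integral g x L"
  unfolding young_has_integral_def
proof (intro allI impI)
  fix e :: real
  assume "0 < e"
  then obtain \<delta> where "\<delta> > 0"
    and \<delta>: "\<And>q. partition01 q \<Longrightarrow> gaps_le \<delta> q \<Longrightarrow> \<bar>riemann_sum g x q - L\<bar> < e / 2"
    using L unfolding riemann_sum_limit_def by (metis half_gt_zero real_norm_def)
  obtain d where "d > 0" and d: "(K + 1) * d powr (\<gamma> - 1) < e / 2"
    using exists_powr_less[of "K + 1" \<gamma> "e / 2"] K \<gamma> \<open>0 < e\<close> by auto
  have "\<bar>(\<Sum>i<N. g (\<xi> i) * (x (p (Suc i)) - x (p i))) - L\<bar> < e"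
    if P: "tagged_partition01 N p \<xi>" and mesh: "mesh N p < min \<delta> d" for N p \<xi>
  proof -
    have "\<bar>riemann_sum g x (map p [0..<Suc N]) - L\<bar> < e / 2"
      using \<delta> tagged_partition01_points[OF P] gaps_le_mono mesh by (meson min.strict_boundedE less_imp_le)
    moreover have "\<bar>(\<Sum>i<N. g (\<xi> i) * (x (p (Suc i)) - x (p i))) - riemann_sum g x (map p [0..<Suc N])\<bar>
        \<le> K * mesh N p powr (\<gamma> - 1)"
      using tagged_sum_riemann_sum_dist[OF yb K \<gamma> P] by simp
    moreover have "K * mesh N p powr (\<gamma> - 1) \<le> (K + 1) * d powr (\<gamma> - 1)"
      using K \<gamma> mesh mesh_pos[OF P] by (intro mult_mono powr_mono2) auto
    ultimately show ?thesis
      using d by linarith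
  qed
  then show "\<exists>\<delta>>0. \<forall>N p \<xi>. tagged_partition01 N p \<xi> \<and> mesh N p < \<delta> \<longrightarrow>
      \<bar>(\<Sum>i<N. g (\<xi> i) * (x (p (Suc i)) - x (p i))) - L\<bar> < e"
    using \<open>\<delta> > 0\<close> \<open>d > 0\<close> by (intro exI[of _ "min \<delta> d"]) auto
qed

lemma young_has_integral_unique:
  assumes "young_has_integral g x L1" "young_has_integral g x L2"
  shows "L1 = L2"
proof (rule ccontr)
  assume "L1 \<noteq> L2"
  define e where "e = \<bar>L1 - L2\<bar> / 2"
  have "e > 0"
    using \<open>L1 \<noteq> L2\<close> by (simp add: e_def)
  obtain d1 where "d1 > 0" and d1: "\<forall>N p \<xi>. tagged_partition01 N p \<xi> \<and> mesh N p < d1 \<longrightarrow>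
      \<bar>(\<Sum>i<N. g (\<xi> i) * (x (p (Suc i)) - x (p i))) - L1\<bar> < e"
    using assms(1) \<open>e > 0\<close> unfolding young_has_integral_def by blast
  obtain d2 where "d2 > 0" and d2: "\<forall>N p \<xi>. tagged_partition01 N p \<xi> \<and> mesh N p < d2 \<longrightarrow>
      \<bar>(\<Sum>i<N. g (\<xi> i) * (x (p (Suc i)) - x (p i))) - L2\<bar> < e"
    using assms(2) \<open>e > 0\<close> unfolding young_has_integral_def by blast
  obtain n where n: "inverse (real (Suc n)) < min d1 d2"
    using reals_Archimedean[of "min d1 d2"] \<open>d1 > 0\<close> \<open>d2 > 0\<close> by auto
  define p where "p i = real i / real (Suc n)" for i
  have P: "tagged_partition01 (Suc n) p p"
    unfolding tagged_partition01_def p_def by (auto simp: divide_right_mono divide_strict_right_mono)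
  have "mesh (Suc n) p < min d1 d2"
    unfolding mesh_def using n
    by (subst Max_less_iff) (auto simp: p_def diff_divide_distrib[symmetric] inverse_eq_divide)
  then have "\<bar>(\<Sum>i<Suc n. g (p i) * (x (p (Suc i)) - x (p i))) - L1\<bar> < e"
    "\<bar>(\<Sum>i<Suc n. g (p i) * (x (p (Suc i)) - x (p i))) - L2\<bar> < e"
    using d1 d2 P by (auto simp del: sum.lessThan_Suc)
  then show False
    unfolding e_def by (simp add: abs_if split: if_splits)
qed

lemma young_integral_eqI: "young_has_integral g x L \<Longrightarrow> young_integral g x = L"
  unfolding young_integral_def using young_has_integral_unique by blast

lemma riemann_sum_limit_young_integral:
  assumes "holder_on \<tau> g" "holder_on \<rho> x" "0 \<le> \<tau>" "0 \<le> \<rho>" "1 < \<tau> + \<rho>"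
  shows "riemann_sum_limit g x (young_integral g x)"
proof -
  obtain Kx where "0 \<le> Kx" "\<And>s t. s \<in> {0..1} \<Longrightarrow> t \<in> {0..1} \<Longrightarrow> \<bar>x t - x s\<bar> \<le> Kx * \<bar>t - s\<bar> powr \<rho>"
    using holder_onE[OF assms(2)] by blast
  then obtain K where "0 \<le> K" and yb: "young_bound g x K (\<tau> + \<rho>)"
    using young_bound_holder[OF assms(1)] assms(3,4) by (metis real_norm_def)
  then obtain L where L: "riemann_sum_limit g x L"
    using riemann_sum_limit_exists assms(5) by blast
  then have "young_has_integral g x L"
    by (rule young_has_integral_if_riemann_sum_limit[OF yb \<open>0 \<le> K\<close> assms(5)])
  then show ?thesis
    using L young_integral_eqI by simp
qed

section \<open>Orthogonal projection onto a finite span\<close>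

lemma exists_orthogonal_projection_span:
  fixes S :: "'h::real_inner set"
  assumes "finite S"
  shows "\<exists>p\<in>span S. \<forall>y\<in>span S. inner (x - p) y = 0"
  using assms
proof (induction S arbitrary: x rule: finite_induct)
  case empty
  show ?case
    by (auto simp: span_empty)
next
  case (insert u S)
  obtain pu where pu: "pu \<in> span S" "\<forall>y\<in>span S. inner (u - pu) y = 0"
    using insert.IH by blast
  obtain px where px: "px \<in> span S" "\<forall>y\<in>span S. inner (x - px) y = 0"
    using insert.IH by blast
  define w where "w = u - pu"
  \<comment> \<open>If \<open>u \<in> span S\<close> then \<open>w = 0\<close>, and division by zero leaves \<open>p = px\<close>.\<close>
  define p where "p = px + (inner (x - px) w / inner w w) *\<^sub>R w"
  have span_S: "span S \<subseteq> span (insert u S)"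
    by (rule span_mono) auto
  have "u \<in> span (insert u S)"
    by (simp add: span_base)
  then have p_span: "p \<in> span (insert u S)"
    unfolding p_def w_def using pu(1) px(1) span_S by (intro span_add span_scale span_diff) auto
  have perp_S: "inner (x - p) y = 0" if "y \<in> span S" for y
  proof -
    have "inner w y = 0"
      using pu(2) that by (simp add: w_def)
    then show ?thesis
      using px(2) that by (simp add: p_def inner_diff_left inner_add_left)
  qed
  have "inner (x - p) w = 0"
    by (cases "w = 0") (simp_all add: p_def inner_diff_left inner_add_left)
  then have perp_u: "inner (x - p) u = 0"
    using perp_S[OF pu(1)] by (simp add: w_def inner_diff_right)
  have "orthogonal (x - p) y" if "y \<in> span (insert u S)" for y
  proof (rule orthogonal_to_span[OF that])
    show "orthogonal (x - p) z" if "z \<in> insert u S" for z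
      using that perp_S perp_u by (auto simp: orthogonal_def span_base)
  qed
  then show ?case
    using p_span by (auto simp: orthogonal_def)
qed

lemma orth_proj_closure_span:
  fixes S :: "'h::real_inner set"
  assumes "finite S"
  shows "orth_proj (closure (span S)) x \<in> closure (span S)"
    and "\<forall>y\<in>closure (span S). inner (x - orth_proj (closure (span S)) x) y = 0"
proof -
  obtain p where p: "p \<in> span S" "\<forall>y\<in>span S. inner (x - p) y = 0"
    using exists_orthogonal_projection_span[OF assms] by blast
  have "closure (span S) \<subseteq> {y. inner (x - p) y = 0}"
    using p(2) by (intro closure_minimal) (auto simp: closed_hyperplane)
  then have perp: "\<forall>y\<in>closure (span S). inner (x - p) y = 0"
    by auto
  have pV: "p \<in> closure (span S)"
    using p(1) closure_subset by blast
  have "orth_proj (closure (span S)) x = p"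
    unfolding orth_proj_def
  proof (rule the_equality)
    show "p \<in> closure (span S) \<and> (\<forall>y\<in>closure (span S). inner (x - p) y = 0)"
      using pV perp by blast
  next
    fix p'
    assume p': "p' \<in> closure (span S) \<and> (\<forall>y\<in>closure (span S). inner (x - p') y = 0)"
    have "inner (p' - p) (p' - p) = inner (x - p) (p' - p) - inner (x - p') (p' - p)"
      by (simp add: inner_diff_left inner_diff_right algebra_simps)
    also have "\<dots> = 0"
      using perp p' pV by (simp add: inner_diff_right)
    finally show "p' = p"
      by simp
  qed
  then show "orth_proj (closure (span S)) x \<in> closure (span S)"
    "\<forall>y\<in>closure (span S). inner (x - orth_proj (closure (span S)) x) y = 0"
    using pV perp by auto
qed

lemma norm_orth_proj_residual_le:
  fixes S :: "'h::real_inner set"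
  assumes "finite S" and v: "v \<in> closure (span S)"
  shows "norm (x - orth_proj (closure (span S)) x) \<le> norm (x + v)"
proof -
  define p where "p = orth_proj (closure (span S)) x"
  have "orthogonal (x - p) (p + v)"
    using orth_proj_closure_span[OF assms(1)] v unfolding p_def by (simp add: orthogonal_def inner_add_right)
  then have "(norm ((x - p) + (p + v)))\<^sup>2 = (norm (x - p))\<^sup>2 + (norm (p + v))\<^sup>2"
    by (rule norm_add_Pythagorean)
  then have "(norm (x - p))\<^sup>2 \<le> (norm (x + v))\<^sup>2"
    by simp
  then show ?thesis
    unfolding p_def by (simp add: power2_le_iff_abs_le)
qed

section \<open>The lower bound from Assumptions 3 and 4\<close>

lemma riemann_sum_outer_in_span:
  assumes "hd (ls @ ts) = 0"
  shows "riemann_sum g x (ls @ [hd ts]) + riemann_sum g x (last ts # rs)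
    \<in> span (set (incr_list x (0 # tl ls @ [hd ts]) @ incr_list x (last ts # rs)))"
proof -
  have "riemann_sum g x (ls @ [hd ts]) \<in> span (set (incr_list x (0 # tl ls @ [hd ts])))"
  proof (cases ls)
    case (Cons l ls')
    then have "ls @ [hd ts] = 0 # tl ls @ [hd ts]"
      using assms by simp
    then show ?thesis
      by (metis riemann_sum_in_span)
  qed (simp add: span_zero)
  moreover have "riemann_sum g x (last ts # rs) \<in> span (set (incr_list x (last ts # rs)))"
    by (rule riemann_sum_in_span)
  moreover have "span (set (incr_list x (0 # tl ls @ [hd ts])))
      \<subseteq> span (set (incr_list x (0 # tl ls @ [hd ts]) @ incr_list x (last ts # rs)))"
    "span (set (incr_list x (last ts # rs)))
      \<subseteq> span (set (incr_list x (0 # tl ls @ [hd ts]) @ incr_list x (last ts # rs)))"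
    by (rule span_mono, simp)+
  ultimately show ?thesis
    by (intro span_add) auto
qed

lemma assumption3_riemann_sum_residual:
  fixes f :: "real \<Rightarrow> 'h::real_inner"
  assumes A3: "assumption3 f \<beta>"
    and ts: "2 \<le> length ts" "sorted_wrt (<) ts" "set ts \<subseteq> {0..1}" "g (hd ts) \<noteq> 0"
    and ls: "set ls \<subseteq> {0..<hd ts}" and rs: "set rs \<subseteq> {last ts<..1}"
  defines "V \<equiv> closure (span (set (incr_list f (0 # tl ls @ [hd ts]) @ incr_list f (last ts # rs))))"
  shows "\<beta> * (norm (riemann_sum g f ts))\<^sup>2 < (norm (riemann_sum g f ts - orth_proj V (riemann_sum g f ts)))\<^sup>2"
proof -
  define as where "as = map (\<lambda>i. g (ts ! i)) [0..<length ts - 1]"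
  have \<Phi>: "riemann_sum g f ts = (\<Sum>i<length as. as ! i *\<^sub>R (f (ts ! Suc i) - f (ts ! i)))"
    by (simp add: as_def riemann_sum_conv_sum)
  have "as ! 0 = g (hd ts)" "as ! 0 \<in> set as"
    using ts(1) by (simp_all add: as_def hd_conv_nth flip: length_greater_0_conv)
  then have "\<exists>a\<in>set as. a \<noteq> 0"
    using ts(4) by metis
  moreover have "set (tl ls) \<subseteq> {0..<hd ts}"
    using ls by (cases ls) auto
  moreover have "length as = length ts - 1"
    by (simp add: as_def)
  ultimately have "2 \<le> length ts \<and> sorted_wrt (<) ts \<and> set ts \<subseteq> {0..1} \<and>
      length as = length ts - 1 \<and> (\<exists>a\<in>set as. a \<noteq> 0) \<and>
      set (tl ls) \<subseteq> {0..<hd ts} \<and> set rs \<subseteq> {last ts<..1}"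
    using ts rs by blast
  then have "let \<Phi> = (\<Sum>i<length as. as ! i *\<^sub>R (f (ts ! Suc i) - f (ts ! i)));
             V = closure (span (set (incr_list f (0 # tl ls @ [hd ts]) @ incr_list f (last ts # rs))))
         in norm (\<Phi> - orth_proj V \<Phi>)^2 > \<beta> * (norm \<Phi>)^2"
    by (rule A3[unfolded assumption3_def, THEN conjunct2, THEN conjunct2, rule_format])
  then show ?thesis
    by (simp only: Let_def V_def[symmetric] \<Phi>[symmetric])
qed

text \<open>The Riemann sums over the parts of the partition outside \<open>ts\<close> lie in the span of the outer
  increments, so they can only increase the distance of the middle sum to that span.\<close>
lemma assumption3_riemann_sum:
  fixes f :: "real \<Rightarrow> 'h::real_inner"
  assumes A3: "assumption3 f \<beta>"
    and ts: "2 \<le> length ts" "sorted_wrt (<) ts" "set ts \<subseteq> {0..1}" "g (hd ts) \<noteq> 0"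
    and ls: "set ls \<subseteq> {0..<hd ts}" "hd (ls @ ts) = 0"
    and rs: "set rs \<subseteq> {last ts<..1}"
  shows "\<beta> * (norm (riemann_sum g f ts))\<^sup>2 \<le> (norm (riemann_sum g f (ls @ ts @ rs)))\<^sup>2"
proof -
  define V where "V = closure (span (set (incr_list f (0 # tl ls @ [hd ts]) @ incr_list f (last ts # rs))))"
  have "riemann_sum g f (ls @ [hd ts]) + riemann_sum g f (last ts # rs) \<in> V"
    unfolding V_def using riemann_sum_outer_in_span[OF ls(2)] closure_subset by blast
  then have "norm (riemann_sum g f ts - orth_proj V (riemann_sum g f ts))
      \<le> norm (riemann_sum g f ts + (riemann_sum g f (ls @ [hd ts]) + riemann_sum g f (last ts # rs)))"
    unfolding V_def by (rule norm_orth_proj_residual_le[rotated]) simp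
  also have "\<dots> = norm (riemann_sum g f (ls @ ts @ rs))"
    using ts(1) by (simp add: riemann_sum_split algebra_simps flip: length_greater_0_conv)
  finally have "(norm (riemann_sum g f ts - orth_proj V (riemann_sum g f ts)))\<^sup>2
      \<le> (norm (riemann_sum g f (ls @ ts @ rs)))\<^sup>2"
    by (rule power_mono) simp
  then show ?thesis
    using assumption3_riemann_sum_residual[where g = g, OF A3 ts ls(1) rs] unfolding V_def by linarith
qed

text \<open>By Assumption 4 every increment inside \<open>[a, b]\<close> has nonnegative inner product with
  \<open>f b - f a\<close>, so the coefficients \<open>\<sigma> g\<close> may be replaced by their lower bound \<open>c\<close>, after which the
  increments telescope.\<close>
lemma assumption4_inner_riemann_sum:
  fixes f :: "real \<Rightarrow> 'h::real_inner"
  assumes A4: "assumption4 f" and ab: "0 \<le> a" "b \<le> 1"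
    and c: "\<And>t. t \<in> {a..b} \<Longrightarrow> c \<le> \<sigma> * g t"
  shows "sorted ts \<Longrightarrow> ts \<noteq> [] \<Longrightarrow> set ts \<subseteq> {a..b} \<Longrightarrow>
    c * inner (f (last ts) - f (hd ts)) (f b - f a) \<le> \<sigma> * inner (riemann_sum g f ts) (f b - f a)"
proof (induction ts rule: induct_list012)
  case (3 s t ts)
  have "0 \<le> inner (f t - f s) (f b - f a)"
    using A4 ab "3.prems" unfolding assumption4_def by auto
  then have "c * inner (f t - f s) (f b - f a) \<le> \<sigma> * g s * inner (f t - f s) (f b - f a)"
    using c "3.prems" by (intro mult_right_mono) auto
  moreover have "c * inner (f (last (t # ts)) - f t) (f b - f a) \<le> \<sigma> * inner (riemann_sum g f (t # ts)) (f b - f a)"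
    using "3.IH"(2) "3.prems" by simp
  ultimately have "c * inner (f t - f s) (f b - f a) + c * inner (f (last (t # ts)) - f t) (f b - f a)
      \<le> \<sigma> * g s * inner (f t - f s) (f b - f a) + \<sigma> * inner (riemann_sum g f (t # ts)) (f b - f a)"
    by (rule add_mono)
  then show ?case
    by (simp add: inner_diff_left inner_add_left algebra_simps)
qed auto

lemma assumption4_norm_riemann_sum:
  fixes f :: "real \<Rightarrow> 'h::real_inner"
  assumes A4: "assumption4 f" and ab: "0 \<le> a" "b \<le> 1" and "0 \<le> c" "\<bar>\<sigma>\<bar> = 1"
    and c: "\<And>t. t \<in> {a..b} \<Longrightarrow> c \<le> \<sigma> * g t"
    and ts: "sorted ts" "ts \<noteq> []" "set ts \<subseteq> {a..b}" "hd ts = a" "last ts = b"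
  shows "c * norm (f b - f a) \<le> norm (riemann_sum g f ts)"
proof -
  have "c * (norm (f b - f a))\<^sup>2 = c * inner (f (last ts) - f (hd ts)) (f b - f a)"
    using ts by (simp add: power2_norm_eq_inner)
  also have "\<dots> \<le> \<sigma> * inner (riemann_sum g f ts) (f b - f a)"
    using assumption4_inner_riemann_sum[OF A4 ab c ts(1-3)] by simp
  also have "\<dots> \<le> \<bar>\<sigma> * inner (riemann_sum g f ts) (f b - f a)\<bar>"
    by (rule abs_ge_self)
  also have "\<dots> = \<bar>inner (riemann_sum g f ts) (f b - f a)\<bar>"
    using \<open>\<bar>\<sigma>\<bar> = 1\<close> by (simp add: abs_mult)
  also have "\<dots> \<le> norm (riemann_sum g f ts) * norm (f b - f a)"
    by (rule Cauchy_Schwarz_ineq2)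
  finally have "(c * norm (f b - f a)) * norm (f b - f a) \<le> norm (riemann_sum g f ts) * norm (f b - f a)"
    by (simp add: power2_eq_square)
  then show ?thesis
    by (cases "f b = f a") (auto intro: mult_right_le_imp_le)
qed

lemma norm_riemann_sum_adapted_partition_lower:
  fixes f :: "real \<Rightarrow> 'h::real_inner"
  assumes A3: "assumption3 f \<beta>" and A4: "assumption4 f"
    and ab: "0 \<le> a" "a < b" "b \<le> 1" and k: "0 < k" and "0 < c" "\<bar>\<sigma>\<bar> = 1"
    and c: "\<And>t. t \<in> {a..b} \<Longrightarrow> c \<le> \<sigma> * g t"
  shows "\<beta> * c\<^sup>2 * (norm (f b - f a))\<^sup>2 \<le> (norm (riemann_sum g f (adapted_partition a b k)))\<^sup>2"
proof -
  obtain L M R where q: "adapted_partition a b k = L @ M @ R"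
    and sets: "set L \<subseteq> {0..<a}" "set M \<subseteq> {a..b}" "set R \<subseteq> {b<..1}"
    and sorted: "sorted L" "sorted M" "sorted R" "a < b \<longrightarrow> sorted_wrt (<) M"
    and "gaps_le (1 / real k) L" "gaps_le (1 / real k) M" "gaps_le (1 / real k) R"
    and M: "length M = Suc k" "hd M = a" "last M = b" "hd (L @ M) = 0"
    and "L = [] \<or> a - last L \<le> 1 / real k" "R = [] \<or> hd R - b \<le> 1 / real k"
    by (rule adapted_partition_parts) (use ab k in auto)
  have "g (hd M) \<noteq> 0"
    using c[of a] \<open>0 < c\<close> ab M(2) by auto
  moreover have "2 \<le> length M" "M \<noteq> []" "sorted_wrt (<) M" "set M \<subseteq> {0..1}"
    using M(1) k sorted(4) ab sets(2) by auto
  moreover have "set L \<subseteq> {0..<hd M}" "set R \<subseteq> {last M<..1}"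
    using sets M by simp_all
  ultimately have "\<beta> * (norm (riemann_sum g f M))\<^sup>2 \<le> (norm (riemann_sum g f (adapted_partition a b k)))\<^sup>2"
    unfolding q using M(4) by (intro assumption3_riemann_sum[OF A3])
  moreover have "c * norm (f b - f a) \<le> norm (riemann_sum g f M)"
    using assumption4_norm_riemann_sum[OF A4 ab(1,3) _ \<open>\<bar>\<sigma>\<bar> = 1\<close> c sorted(2) \<open>M \<noteq> []\<close> sets(2) M(2,3)]
      \<open>0 < c\<close> by simp
  then have "\<beta> * (c * norm (f b - f a))\<^sup>2 \<le> \<beta> * (norm (riemann_sum g f M))\<^sup>2"
    using A3 \<open>0 < c\<close> unfolding assumption3_def by (intro mult_left_mono power_mono) auto
  ultimately show ?thesis
    by (simp add: power_mult_distrib mult.assoc)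
qed

lemma riemann_sum_limit_lower_bound:
  fixes f :: "real \<Rightarrow> 'h::real_inner"
  assumes A3: "assumption3 f \<beta>" and A4: "assumption4 f" and F: "riemann_sum_limit g f F"
    and ab: "0 \<le> a" "a < b" "b \<le> 1" and "0 < c" "\<bar>\<sigma>\<bar> = 1"
    and c: "\<And>t. t \<in> {a..b} \<Longrightarrow> c \<le> \<sigma> * g t"
  shows "\<beta> * c\<^sup>2 * (norm (f b - f a))\<^sup>2 \<le> (norm F)\<^sup>2"
proof (rule LIMSEQ_le_const)
  have "(\<lambda>k. riemann_sum g f (adapted_partition a b (Suc k))) \<longlonglongrightarrow> F"
    using F ab by (intro riemann_sum_limit_imp_LIMSEQ) auto
  then show "(\<lambda>k. (norm (riemann_sum g f (adapted_partition a b (Suc k))))\<^sup>2) \<longlonglongrightarrow> (norm F)\<^sup>2"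
    by (intro tendsto_intros)
  show "\<exists>N. \<forall>k\<ge>N. \<beta> * c\<^sup>2 * (norm (f b - f a))\<^sup>2 \<le> (norm (riemann_sum g f (adapted_partition a b (Suc k))))\<^sup>2"
    using norm_riemann_sum_adapted_partition_lower[OF A3 A4 ab _ \<open>0 < c\<close> \<open>\<bar>\<sigma>\<bar> = 1\<close> c] by simp
qed

section \<open>Isometries into \<open>L\<^sup>2\<close>\<close>

definition l2_isometry :: "'w measure \<Rightarrow> real \<Rightarrow> ('h::real_inner \<Rightarrow> 'w \<Rightarrow> real) \<Rightarrow> bool" where
  "l2_isometry M \<kappa> I \<longleftrightarrow> (\<forall>h. I h \<in> borel_measurable M) \<and> (\<forall>h. integrable M (\<lambda>\<omega>. (I h \<omega>)\<^sup>2)) \<and>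
     (\<forall>h k. (\<integral>\<omega>. I h \<omega> * I k \<omega> \<partial>M) = \<kappa> * inner h k)"

lemma integrable_l2_isometry_mult:
  assumes "l2_isometry M \<kappa> I"
  shows "integrable M (\<lambda>\<omega>. I h \<omega> * I k \<omega>)"
proof (rule Bochner_Integration.integrable_bound)
  show "integrable M (\<lambda>\<omega>. (I h \<omega>)\<^sup>2 + (I k \<omega>)\<^sup>2)"
    using assms unfolding l2_isometry_def by (intro Bochner_Integration.integrable_add) auto
  show "(\<lambda>\<omega>. I h \<omega> * I k \<omega>) \<in> borel_measurable M"
    using assms unfolding l2_isometry_def by (intro borel_measurable_times) auto
  have "\<bar>u * v\<bar> \<le> u\<^sup>2 + v\<^sup>2" for u v :: real
    using sum_squares_bound[of u v] sum_squares_bound[of u "- v"] by (simp add: abs_le_iff)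
  then show "AE \<omega> in M. norm (I h \<omega> * I k \<omega>) \<le> norm ((I h \<omega>)\<^sup>2 + (I k \<omega>)\<^sup>2)"
    by (simp del: abs_mult)
qed

lemma integral_square_l2_isometry:
  assumes "l2_isometry M \<kappa> I"
  shows "(\<integral>\<omega>. (I h \<omega>)\<^sup>2 \<partial>M) = \<kappa> * (norm h)\<^sup>2"
proof -
  have "(\<integral>\<omega>. (I h \<omega>)\<^sup>2 \<partial>M) = (\<integral>\<omega>. I h \<omega> * I h \<omega> \<partial>M)"
    by (simp add: power2_eq_square)
  also have "\<dots> = \<kappa> * inner h h"
    using assms by (simp add: l2_isometry_def)
  finally show ?thesis
    by (simp add: power2_norm_eq_inner)
qed

lemma l2_isometry_sum_square:
  assumes iso: "l2_isometry M \<kappa> I" and A: "finite A"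
  shows "integrable M (\<lambda>\<omega>. (\<Sum>i\<in>A. a i * I (h i) \<omega>)\<^sup>2)"
    "(\<integral>\<omega>. (\<Sum>i\<in>A. a i * I (h i) \<omega>)\<^sup>2 \<partial>M) = \<kappa> * (norm (\<Sum>i\<in>A. a i *\<^sub>R h i))\<^sup>2"
proof -
  have eq: "(\<lambda>\<omega>. (\<Sum>i\<in>A. a i * I (h i) \<omega>)\<^sup>2)
      = (\<lambda>\<omega>. \<Sum>i\<in>A. \<Sum>j\<in>A. (a i * a j) * (I (h i) \<omega> * I (h j) \<omega>))"
    by (auto simp: power2_eq_square sum_product algebra_simps)
  show "integrable M (\<lambda>\<omega>. (\<Sum>i\<in>A. a i * I (h i) \<omega>)\<^sup>2)"
    unfolding eq by (simp add: integrable_l2_isometry_mult[OF iso])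
  have "(\<integral>\<omega>. (\<Sum>i\<in>A. a i * I (h i) \<omega>)\<^sup>2 \<partial>M) = (\<Sum>i\<in>A. \<Sum>j\<in>A. (a i * a j) * (\<kappa> * inner (h i) (h j)))"
    using iso unfolding eq l2_isometry_def
    by (simp add: integrable_l2_isometry_mult[OF iso])
  also have "\<dots> = \<kappa> * inner (\<Sum>i\<in>A. a i *\<^sub>R h i) (\<Sum>j\<in>A. a j *\<^sub>R h j)"
    by (simp add: inner_sum_left inner_sum_right sum_distrib_left algebra_simps inner_commute)
  finally show "(\<integral>\<omega>. (\<Sum>i\<in>A. a i * I (h i) \<omega>)\<^sup>2 \<partial>M) = \<kappa> * (norm (\<Sum>i\<in>A. a i *\<^sub>R h i))\<^sup>2"
    by (simp add: power2_norm_eq_inner)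
qed

text \<open>The difference of the two sides has vanishing second moment.\<close>
lemma AE_l2_isometry_sum:
  assumes iso: "l2_isometry M \<kappa> I" and A: "finite A"
  shows "AE \<omega> in M. I (\<Sum>i\<in>A. a i *\<^sub>R h i) \<omega> = (\<Sum>i\<in>A. a i * I (h i) \<omega>)"
proof -
  define w where "w = (\<Sum>i\<in>A. a i *\<^sub>R h i)"
  define Z where "Z \<omega> = (\<Sum>i\<in>A. a i * I (h i) \<omega>)" for \<omega>
  have Z: "integrable M (\<lambda>\<omega>. (Z \<omega>)\<^sup>2)" "(\<integral>\<omega>. (Z \<omega>)\<^sup>2 \<partial>M) = \<kappa> * (norm w)\<^sup>2"
    using l2_isometry_sum_square[OF iso A, of a h] unfolding Z_def w_def by auto
  have W: "integrable M (\<lambda>\<omega>. (I w \<omega>)\<^sup>2)" "(\<integral>\<omega>. (I w \<omega>)\<^sup>2 \<partial>M) = \<kappa> * (norm w)\<^sup>2"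
    using iso integral_square_l2_isometry[OF iso] by (auto simp: l2_isometry_def)
  have WZ_eq: "(\<lambda>\<omega>. I w \<omega> * Z \<omega>) = (\<lambda>\<omega>. \<Sum>i\<in>A. a i * (I w \<omega> * I (h i) \<omega>))"
    unfolding Z_def by (auto simp: sum_distrib_left algebra_simps)
  have WZ: "integrable M (\<lambda>\<omega>. I w \<omega> * Z \<omega>)"
    unfolding WZ_eq by (simp add: integrable_l2_isometry_mult[OF iso])
  have "(\<integral>\<omega>. I w \<omega> * Z \<omega> \<partial>M) = (\<Sum>i\<in>A. a i * (\<kappa> * inner w (h i)))"
    using iso unfolding WZ_eq l2_isometry_def by (simp add: integrable_l2_isometry_mult[OF iso])
  also have "\<dots> = \<kappa> * inner w (\<Sum>i\<in>A. a i *\<^sub>R h i)"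
    by (simp add: inner_sum_right sum_distrib_left algebra_simps)
  also have "\<dots> = \<kappa> * (norm w)\<^sup>2"
    by (simp add: power2_norm_eq_inner flip: w_def)
  finally have WZ_int: "(\<integral>\<omega>. I w \<omega> * Z \<omega> \<partial>M) = \<kappa> * (norm w)\<^sup>2" .
  have sq: "(\<lambda>\<omega>. (I w \<omega> - Z \<omega>)\<^sup>2) = (\<lambda>\<omega>. (I w \<omega>)\<^sup>2 - 2 * (I w \<omega> * Z \<omega>) + (Z \<omega>)\<^sup>2)"
    by (auto simp: power2_diff)
  have "integrable M (\<lambda>\<omega>. (I w \<omega>)\<^sup>2 - 2 * (I w \<omega> * Z \<omega>))"
    using W(1) WZ by (intro Bochner_Integration.integrable_diff) simp_all
  then have int: "integrable M (\<lambda>\<omega>. (I w \<omega> - Z \<omega>)\<^sup>2)"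
    unfolding sq using Z(1) by (rule Bochner_Integration.integrable_add)
  have "(\<integral>\<omega>. (I w \<omega> - Z \<omega>)\<^sup>2 \<partial>M) = 0"
    unfolding sq using W Z WZ WZ_int
    by (simp add: integral_add integral_diff integrable_diff integrable_mult_right)
  then have "AE \<omega> in M. (I w \<omega> - Z \<omega>)\<^sup>2 = 0"
    using integral_nonneg_eq_0_iff_AE[OF int] by simp
  then show ?thesis
    unfolding w_def[symmetric] Z_def[symmetric] by eventually_elim simp
qed

lemma AE_l2_isometry_diff:
  assumes "l2_isometry M \<kappa> I"
  shows "AE \<omega> in M. I (u - v) \<omega> = I u \<omega> - I v \<omega>"
  using AE_l2_isometry_sum[OF assms, of "{0::nat, 1}" "\<lambda>i. if i = 0 then 1 else -1" "\<lambda>i. if i = 0 then u else v"]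
  by simp

lemma integrable_l2_isometry_diff_square:
  assumes "l2_isometry M \<kappa> I"
  shows "integrable M (\<lambda>\<omega>. (I u \<omega> - I v \<omega>)\<^sup>2)"
  using l2_isometry_sum_square(1)[OF assms, of "{0::nat, 1}" "\<lambda>i. if i = 0 then 1 else -1" "\<lambda>i. if i = 0 then u else v"]
  by simp

lemma (in complete_measure) borel_measurable_AE_eq:
  fixes f g :: "'a \<Rightarrow> real"
  assumes f: "f \<in> borel_measurable M" and ae: "AE x in M. f x = g x"
  shows "g \<in> borel_measurable M"
proof (rule measurableI)
  fix A :: "real set"
  assume "A \<in> sets borel"
  show "g -` A \<inter> space M \<in> sets M"
  proof (rule in_sets_AE)
    show "f -` A \<inter> space M \<in> sets M"
      using f \<open>A \<in> sets borel\<close> by (rule measurable_sets)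
    show "AE x in M. (x \<in> f -` A \<inter> space M) = (x \<in> g -` A \<inter> space M)"
      using ae by eventually_elim auto
  qed auto
qed simp

lemma integral_square_AE_eq_l2_isometry:
  assumes iso: "l2_isometry M \<kappa> I" and "Z \<in> borel_measurable M" and Z: "AE \<omega> in M. Z \<omega> = I h \<omega>"
  shows "(\<integral>\<omega>. (Z \<omega>)\<^sup>2 \<partial>M) = \<kappa> * (norm h)\<^sup>2"
proof -
  have "(\<integral>\<omega>. (Z \<omega>)\<^sup>2 \<partial>M) = (\<integral>\<omega>. (I h \<omega>)\<^sup>2 \<partial>M)"
    using iso Z \<open>Z \<in> borel_measurable M\<close> unfolding l2_isometry_def
    by (intro integral_cong_AE) (auto elim: AE_mp)
  also have "\<dots> = \<kappa> * (norm h)\<^sup>2"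
    by (rule integral_square_l2_isometry[OF iso])
  finally show ?thesis .
qed

lemma integral_square_AE_eq_l2_isometry_complete:
  assumes iso: "l2_isometry M \<kappa> I" and "complete_measure M" and Z: "AE \<omega> in M. Z \<omega> = I h \<omega>"
  shows "(\<integral>\<omega>. (Z \<omega>)\<^sup>2 \<partial>M) = \<kappa> * (norm h)\<^sup>2"
proof (rule integral_square_AE_eq_l2_isometry[OF iso _ Z])
  have "I h \<in> borel_measurable M"
    using iso by (simp add: l2_isometry_def)
  moreover have "AE \<omega> in M. I h \<omega> = Z \<omega>"
    using Z by (simp add: eq_commute)
  ultimately show "Z \<in> borel_measurable M"
    by (rule complete_measure.borel_measurable_AE_eq[OF \<open>complete_measure M\<close>])
qed

lemma integral_square_increment_l2_isometry:
  assumes iso: "l2_isometry M \<kappa> I" and "complete_measure M"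
    and X: "\<And>t. t \<in> {0..1} \<Longrightarrow> AE \<omega> in M. X t \<omega> = I (f t) \<omega>" and "a \<in> {0..1}" "b \<in> {0..1}"
  shows "(\<integral>\<omega>. (X b \<omega> - X a \<omega>)\<^sup>2 \<partial>M) = \<kappa> * (norm (f b - f a))\<^sup>2"
  using X[OF \<open>a \<in> {0..1}\<close>] X[OF \<open>b \<in> {0..1}\<close>] AE_l2_isometry_diff[OF iso, of "f b" "f a"]
  by (intro integral_square_AE_eq_l2_isometry_complete[OF iso \<open>complete_measure M\<close>]) (auto elim: AE_mp)

lemma AE_riemann_sum_l2_isometry:
  assumes iso: "l2_isometry M \<kappa> I"
    and X: "\<And>t. t \<in> {0..1} \<Longrightarrow> AE \<omega> in M. X t \<omega> = I (f t) \<omega>" and q: "set q \<subseteq> {0..1}"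
  shows "AE \<omega> in M. riemann_sum g (\<lambda>t. X t \<omega>) q = I (riemann_sum g f q) \<omega>"
proof -
  define m where "m = length q - 1"
  have "AE \<omega> in M. I (riemann_sum g f q) \<omega> = (\<Sum>i<m. g (q!i) * I (f (q!Suc i) - f (q!i)) \<omega>)"
    unfolding riemann_sum_conv_sum m_def by (rule AE_l2_isometry_sum[OF iso]) simp
  moreover have "AE \<omega> in M. \<forall>i\<in>{..<m}. I (f (q!Suc i) - f (q!i)) \<omega> = I (f (q!Suc i)) \<omega> - I (f (q!i)) \<omega>"
    by (rule AE_finite_allI) (auto intro: AE_l2_isometry_diff[OF iso])
  moreover have "AE \<omega> in M. \<forall>t\<in>set q. X t \<omega> = I (f t) \<omega>"
    using q by (intro AE_finite_allI) (auto intro: X)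
  ultimately show ?thesis
  proof eventually_elim
    case (elim \<omega>)
    have "i < m \<Longrightarrow> q!i \<in> set q \<and> q!Suc i \<in> set q" for i
      by (simp add: m_def)
    then have "riemann_sum g (\<lambda>t. X t \<omega>) q = (\<Sum>i<m. g (q!i) * I (f (q!Suc i) - f (q!i)) \<omega>)"
      using elim by (simp add: riemann_sum_conv_sum m_def)
    then show ?case
      using elim by simp
  qed
qed

text \<open>Fatou's lemma applied to \<open>(Z k - W)\<^sup>2\<close>.\<close>
lemma AE_eq_if_L2_limit_and_AE_limit:
  fixes Z :: "nat \<Rightarrow> 'a \<Rightarrow> real"
  assumes meas: "\<And>k. Z k \<in> borel_measurable M" "W \<in> borel_measurable M"
    and int: "\<And>k. integrable M (\<lambda>\<omega>. (Z k \<omega> - W \<omega>)\<^sup>2)"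
    and L2: "(\<lambda>k. \<integral>\<omega>. (Z k \<omega> - W \<omega>)\<^sup>2 \<partial>M) \<longlonglongrightarrow> 0"
    and AE: "AE \<omega> in M. (\<lambda>k. Z k \<omega>) \<longlonglongrightarrow> Y \<omega>"
  shows "AE \<omega> in M. Y \<omega> = W \<omega>"
proof -
  define D where "D k \<omega> = ennreal ((Z k \<omega> - W \<omega>)\<^sup>2)" for k \<omega>
  have D_meas: "D k \<in> borel_measurable M" for k
    unfolding D_def using meas by measurable
  have "(\<integral>\<^sup>+ \<omega>. D k \<omega> \<partial>M) = ennreal (\<integral>\<omega>. (Z k \<omega> - W \<omega>)\<^sup>2 \<partial>M)" for k
    unfolding D_def by (rule nn_integral_eq_integral[OF int]) simp
  moreover have "(\<lambda>k. ennreal (\<integral>\<omega>. (Z k \<omega> - W \<omega>)\<^sup>2 \<partial>M)) \<longlonglongrightarrow> ennreal 0"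
    using L2 by (rule tendsto_ennrealI)
  ultimately have "(\<lambda>k. \<integral>\<^sup>+ \<omega>. D k \<omega> \<partial>M) \<longlonglongrightarrow> ennreal 0"
    by simp
  then have "liminf (\<lambda>k. \<integral>\<^sup>+ \<omega>. D k \<omega> \<partial>M) = 0"
    by (simp add: lim_imp_Liminf)
  moreover have "(\<integral>\<^sup>+ \<omega>. liminf (\<lambda>k. D k \<omega>) \<partial>M) \<le> liminf (\<lambda>k. \<integral>\<^sup>+ \<omega>. D k \<omega> \<partial>M)"
    by (rule nn_integral_liminf[OF D_meas])
  ultimately have "(\<integral>\<^sup>+ \<omega>. liminf (\<lambda>k. D k \<omega>) \<partial>M) = 0"
    by simp
  then have "AE \<omega> in M. liminf (\<lambda>k. D k \<omega>) = 0"
    by (subst (asm) nn_integral_0_iff_AE) (use D_meas in \<open>auto intro: borel_measurable_liminf\<close>)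
  with AE show ?thesis
  proof eventually_elim
    case (elim \<omega>)
    then have "(\<lambda>k. D k \<omega>) \<longlonglongrightarrow> ennreal ((Y \<omega> - W \<omega>)\<^sup>2)"
      unfolding D_def by (intro tendsto_ennrealI tendsto_intros)
    then have "liminf (\<lambda>k. D k \<omega>) = ennreal ((Y \<omega> - W \<omega>)\<^sup>2)"
      by (simp add: lim_imp_Liminf)
    then show ?case
      using elim by (simp add: ennreal_eq_0_iff)
  qed
qed

lemma AE_eq_riemann_sum_limit_l2_isometry:
  assumes iso: "l2_isometry M \<kappa> I"
    and X: "\<And>t. t \<in> {0..1} \<Longrightarrow> AE \<omega> in M. X t \<omega> = I (f t) \<omega>"
    and Y: "AE \<omega> in M. riemann_sum_limit g (\<lambda>t. X t \<omega>) (Y \<omega>)"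
    and F: "riemann_sum_limit g f F"
  shows "AE \<omega> in M. Y \<omega> = I F \<omega>"
proof (rule AE_eq_if_L2_limit_and_AE_limit)
  define q where "q k = adapted_partition 0 1 (Suc k)" for k
  define Fk where "Fk k = riemann_sum g f (q k)" for k
  have I_meas: "I h \<in> borel_measurable M" for h
    using iso by (simp add: l2_isometry_def)
  then show "I (Fk k) \<in> borel_measurable M" "I F \<in> borel_measurable M" for k
    by simp_all
  show "integrable M (\<lambda>\<omega>. (I (Fk k) \<omega> - I F \<omega>)\<^sup>2)" for k
    by (rule integrable_l2_isometry_diff_square[OF iso])
  have "(\<integral>\<omega>. (I (Fk k) \<omega> - I F \<omega>)\<^sup>2 \<partial>M) = \<kappa> * (norm (Fk k - F))\<^sup>2" for k
    using AE_l2_isometry_diff[OF iso, of "Fk k" F] I_meas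
    by (intro integral_square_AE_eq_l2_isometry[OF iso]) (auto elim: AE_mp)
  moreover have "Fk \<longlonglongrightarrow> F"
    unfolding Fk_def q_def by (rule riemann_sum_limit_imp_LIMSEQ[OF F]) simp_all
  then have "(\<lambda>k. \<kappa> * (norm (Fk k - F))\<^sup>2) \<longlonglongrightarrow> \<kappa> * (norm (F - F))\<^sup>2"
    by (intro tendsto_intros)
  ultimately show "(\<lambda>k. \<integral>\<omega>. (I (Fk k) \<omega> - I F \<omega>)\<^sup>2 \<partial>M) \<longlonglongrightarrow> 0"
    by simp
  have "AE \<omega> in M. riemann_sum g (\<lambda>t. X t \<omega>) (q k) = I (Fk k) \<omega>" for k
  proof -
    have "set (q k) \<subseteq> {0..1}"
      using partition01_adapted_partition[of 0 1 "Suc k"] by (simp add: q_def partition01_def)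
    then show ?thesis
      unfolding Fk_def by (intro AE_riemann_sum_l2_isometry[OF iso X]) auto
  qed
  then have "AE \<omega> in M. \<forall>k. riemann_sum g (\<lambda>t. X t \<omega>) (q k) = I (Fk k) \<omega>"
    by (simp add: AE_all_countable)
  with Y show "AE \<omega> in M. (\<lambda>k. I (Fk k) \<omega>) \<longlonglongrightarrow> Y \<omega>"
  proof eventually_elim
    case (elim \<omega>)
    then have "(\<lambda>k. riemann_sum g (\<lambda>t. X t \<omega>) (q k)) \<longlonglongrightarrow> Y \<omega>"
      unfolding q_def by (intro riemann_sum_limit_imp_LIMSEQ) simp_all
    then show ?case
      using elim by simp
  qed
qed

lemma integral_square_young_integral_lower_bound:
  fixes f :: "real \<Rightarrow> 'h::real_inner"
  assumes iso: "l2_isometry M \<kappa> I" "0 \<le> \<kappa>" and "complete_measure M"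
    and X: "\<And>t. t \<in> {0..1} \<Longrightarrow> AE \<omega> in M. X t \<omega> = I (f t) \<omega>"
    and Y: "AE \<omega> in M. riemann_sum_limit g (\<lambda>t. X t \<omega>) (Y \<omega>)"
    and F: "riemann_sum_limit g f F"
    and A3: "assumption3 f \<beta>" and A4: "assumption4 f"
    and ab: "0 \<le> a" "a < b" "b \<le> 1" and "0 < c" "\<bar>\<sigma>\<bar> = 1" and c: "\<forall>t\<in>{a..b}. c \<le> \<sigma> * g t"
  shows "\<beta> * c\<^sup>2 * (\<integral>\<omega>. (X b \<omega> - X a \<omega>)\<^sup>2 \<partial>M) \<le> (\<integral>\<omega>. (Y \<omega>)\<^sup>2 \<partial>M)"
proof -
  have "AE \<omega> in M. Y \<omega> = I F \<omega>"
    using X Y F by (rule AE_eq_riemann_sum_limit_l2_isometry[OF iso(1)])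
  then have "(\<integral>\<omega>. (Y \<omega>)\<^sup>2 \<partial>M) = \<kappa> * (norm F)\<^sup>2"
    by (rule integral_square_AE_eq_l2_isometry_complete[OF iso(1) \<open>complete_measure M\<close>])
  moreover have "(\<integral>\<omega>. (X b \<omega> - X a \<omega>)\<^sup>2 \<partial>M) = \<kappa> * (norm (f b - f a))\<^sup>2"
    using ab by (intro integral_square_increment_l2_isometry[OF iso(1) \<open>complete_measure M\<close> X]) auto
  moreover have "\<beta> * c\<^sup>2 * (norm (f b - f a))\<^sup>2 \<le> (norm F)\<^sup>2"
    using c by (intro riemann_sum_limit_lower_bound[OF A3 A4 F ab \<open>0 < c\<close> \<open>\<bar>\<sigma>\<bar> = 1\<close>]) auto
  then have "\<kappa> * (\<beta> * c\<^sup>2 * (norm (f b - f a))\<^sup>2) \<le> \<kappa> * (norm F)\<^sup>2"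
    using iso(2) by (rule mult_left_mono)
  ultimately show ?thesis
    by (simp add: ac_simps)
qed

section \<open>Hoelder functions and the choice of the interval\<close>

lemma assumption1_holder:
  assumes "assumption1 f C \<theta>" and "s \<in> {0..1}" "t \<in> {0..1}"
  shows "norm (f t - f s) \<le> C * \<bar>t - s\<bar> powr (\<theta> / 2)"
proof (cases s t rule: linorder_cases)
  case greater
  then have "norm (f s - f t) \<le> C * (s - t) powr (\<theta> / 2)"
    using assms unfolding assumption1_def by auto
  then show ?thesis
    using greater by (simp add: norm_minus_commute)
qed (use assms in \<open>auto simp: assumption1_def\<close>)

lemma holder_on_continuous:
  assumes "holder_on \<tau> g" "0 < \<tau>"
  shows "continuous_on {0..1} g"
  unfolding continuous_on_iff
proof (intro ballI allI impI)
  fix x e :: real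
  assume x: "x \<in> {0..1}" and "0 < e"
  obtain K where "0 \<le> K" and K: "\<And>s t. s \<in> {0..1} \<Longrightarrow> t \<in> {0..1} \<Longrightarrow> \<bar>g t - g s\<bar> \<le> K * \<bar>t - s\<bar> powr \<tau>"
    using holder_onE[OF assms(1)] by blast
  define d where "d = (e / (K + 1)) powr (1 / \<tau>)"
  have "0 < d"
    using \<open>0 < e\<close> \<open>0 \<le> K\<close> by (simp add: d_def)
  have d_powr: "d powr \<tau> = e / (K + 1)"
    unfolding d_def powr_powr using assms(2) \<open>0 < e\<close> \<open>0 \<le> K\<close> by simp
  have "dist (g y) (g x) < e" if "y \<in> {0..1}" "dist y x < d" for y
  proof -
    have "\<bar>y - x\<bar> powr \<tau> < d powr \<tau>"
      using that assms(2) by (intro powr_less_mono2) (auto simp: dist_real_def)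
    then have "(K + 1) * \<bar>y - x\<bar> powr \<tau> < e"
      using \<open>0 \<le> K\<close> d_powr by (simp add: field_simps)
    moreover have "K * \<bar>y - x\<bar> powr \<tau> \<le> (K + 1) * \<bar>y - x\<bar> powr \<tau>"
      by (rule mult_right_mono) simp_all
    moreover have "\<bar>g y - g x\<bar> \<le> K * \<bar>y - x\<bar> powr \<tau>"
      using K[OF x that(1)] .
    ultimately show ?thesis
      by (simp add: dist_real_def)
  qed
  then show "\<exists>d>0. \<forall>y\<in>{0..1}. dist y x < d \<longrightarrow> dist (g y) (g x) < e"
    using \<open>0 < d\<close> by blast
qed

lemma holder_norm_bound:
  assumes "holder_on \<tau> g"
  shows "0 \<le> holder_norm \<tau> g"
    and "\<And>s t. s \<in> {0..1} \<Longrightarrow> t \<in> {0..1} \<Longrightarrow> \<bar>g t - g s\<bar> \<le> holder_norm \<tau> g * \<bar>t - s\<bar> powr \<tau>"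
proof -
  obtain K where K: "\<And>s t. s \<in> {0..1} \<Longrightarrow> t \<in> {0..1} \<Longrightarrow> \<bar>g t - g s\<bar> \<le> K * \<bar>t - s\<bar> powr \<tau>"
    using holder_onE[OF assms] by blast
  define P where "P = {(s, t). s \<in> {0..1} \<and> t \<in> {0..1} \<and> s \<noteq> (t::real)}"
  define q where "q st = \<bar>g (snd st) - g (fst st)\<bar> / \<bar>snd st - fst st\<bar> powr \<tau>" for st
  have "bdd_above (q ` P)"
    using K by (intro bdd_aboveI2[of _ _ K]) (auto simp: P_def q_def pos_divide_le_eq)
  then have q_le: "q st \<le> holder_norm \<tau> g" if "st \<in> P" for st
    unfolding holder_norm_def P_def[symmetric] q_def[symmetric] using that by (rule cSUP_upper2) simp
  then show "0 \<le> holder_norm \<tau> g"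
    using q_le[of "(0, 1)"] by (auto simp: P_def q_def intro: order_trans[rotated])
  show "\<bar>g t - g s\<bar> \<le> holder_norm \<tau> g * \<bar>t - s\<bar> powr \<tau>" if "s \<in> {0..1}" "t \<in> {0..1}" for s t
  proof (cases "s = t")
    case False
    then show ?thesis
      using q_le[of "(s, t)"] that by (simp add: P_def q_def pos_divide_le_eq)
  qed simp
qed

lemma holder_norm_eq_0:
  assumes "\<And>r. r \<in> {0..1} \<Longrightarrow> g r = 0"
  shows "holder_norm \<tau> g = 0"
proof -
  have "holder_norm \<tau> g = (SUP st \<in> {(s, t). s \<in> {0..1} \<and> t \<in> {0..1} \<and> s \<noteq> (t::real)}. 0::real)"
    unfolding holder_norm_def by (rule SUP_cong) (auto simp: assms)
  also have "\<dots> = 0"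
  proof (rule cSUP_const)
    have "(0, 1) \<in> {(s, t). s \<in> {0..1} \<and> t \<in> {0..1} \<and> s \<noteq> (t::real)}"
      by simp
    then show "{(s, t). s \<in> {0..1} \<and> t \<in> {0..1} \<and> s \<noteq> (t::real)} \<noteq> {}"
      by blast
  qed
  finally show ?thesis .
qed

lemma SUP_abs_attained:
  fixes g :: "real \<Rightarrow> real"
  assumes "continuous_on {0..1} g"
  obtains r where "r \<in> {0..1}" "\<And>t. t \<in> {0..1} \<Longrightarrow> \<bar>g t\<bar> \<le> \<bar>g r\<bar>" "(SUP t\<in>{0..1}. \<bar>g t\<bar>) = \<bar>g r\<bar>"
proof -
  have "continuous_on {0..1} (\<lambda>t. \<bar>g t\<bar>)"
    using assms by (rule continuous_on_rabs)
  then obtain r where r: "r \<in> {0..1}" "\<And>t. t \<in> {0..1} \<Longrightarrow> \<bar>g t\<bar> \<le> \<bar>g r\<bar>"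
    using continuous_attains_sup[of "{0..1::real}" "\<lambda>t. \<bar>g t\<bar>"] by auto
  moreover have "(SUP t\<in>{0..1}. \<bar>g t\<bar>) = \<bar>g r\<bar>"
    using r by (intro antisym cSUP_least cSUP_upper2[of _ _ r] bdd_aboveI2[of _ _ "\<bar>g r\<bar>"]) auto
  ultimately show ?thesis
    using that by blast
qed

lemma exists_interval_around:
  fixes \<delta> r :: real
  assumes "0 < \<delta>" "r \<in> {0..1}"
  obtains a b where "0 \<le> a" "a < b" "b \<le> 1" "r \<in> {a..b}" "b - a = min \<delta> 1"
proof -
  define a where "a = max 0 (min (r - \<delta> / 2) (1 - min \<delta> 1))"
  show ?thesis
    by (rule that[of a "a + min \<delta> 1"]) (use assms in \<open>auto simp: a_def max_def min_def\<close>)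
qed

lemma holder_near_extremum:
  fixes g :: "real \<Rightarrow> real"
  assumes g: "holder_on \<tau> g" and "0 < \<tau>" "0 < holder_norm \<tau> g"
    and r: "r \<in> {0..1}" "\<bar>\<sigma>\<bar> = 1" "\<sigma> * g r = m" "0 < m"
    and t: "t \<in> {0..1}" "\<bar>t - r\<bar> \<le> (m / (2 * holder_norm \<tau> g)) powr (1 / \<tau>)"
  shows "m / 2 \<le> \<sigma> * g t"
proof -
  have "\<bar>t - r\<bar> powr \<tau> \<le> ((m / (2 * holder_norm \<tau> g)) powr (1 / \<tau>)) powr \<tau>"
    using t \<open>0 < \<tau>\<close> by (intro powr_mono2) auto
  also have "\<dots> = m / (2 * holder_norm \<tau> g)"
    unfolding powr_powr using assms by simp
  finally have "holder_norm \<tau> g * \<bar>t - r\<bar> powr \<tau> \<le> m / 2"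
    using assms by (simp add: field_simps)
  then have "\<bar>g t - g r\<bar> \<le> m / 2"
    using holder_norm_bound(2)[OF g r(1) t(1)] by simp
  moreover have "\<sigma> * g t = m + \<sigma> * (g t - g r)"
    using r by (simp add: algebra_simps)
  moreover have "\<bar>\<sigma> * (g t - g r)\<bar> = \<bar>g t - g r\<bar>"
    using r by (simp only: abs_mult) simp
  ultimately show ?thesis
    by linarith
qed

text \<open>The interval is placed, as far as \<open>[0, 1]\<close> allows, around a maximum point of \<open>\<bar>g\<bar>\<close>.\<close>
lemma holder_sup_interval:
  fixes g :: "real \<Rightarrow> real"
  assumes g: "holder_on \<tau> g" and "0 < \<tau>" and "holder_norm \<tau> g \<noteq> 0"
  defines "m \<equiv> SUP r\<in>{0..1}. \<bar>g r\<bar>"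
  obtains a b \<sigma> where "0 \<le> a" "a < b" "b \<le> 1" "\<bar>\<sigma>\<bar> = 1" "0 < m"
    and "a = 0 \<and> b = 1 \<or> (m / (2 * holder_norm \<tau> g)) powr (1 / \<tau>) \<le> b - a"
    and "\<forall>t\<in>{a..b}. m / 2 \<le> \<sigma> * g t"
proof -
  have K: "0 < holder_norm \<tau> g"
    using holder_norm_bound(1)[OF g] assms(3) by simp
  obtain r where r: "r \<in> {0..1}" "\<And>t. t \<in> {0..1} \<Longrightarrow> \<bar>g t\<bar> \<le> \<bar>g r\<bar>" and m: "m = \<bar>g r\<bar>"
    using SUP_abs_attained[OF holder_on_continuous[OF g \<open>0 < \<tau>\<close>]] unfolding m_def by blast
  have "0 < m"
    using r holder_norm_eq_0[of g \<tau>] assms(3) unfolding m by force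
  have \<sigma>: "\<bar>sgn (g r)\<bar> = 1" "sgn (g r) * g r = m"
    using \<open>0 < m\<close> by (auto simp: m abs_sgn sgn_mult_abs)
  define \<delta> where "\<delta> = (m / (2 * holder_norm \<tau> g)) powr (1 / \<tau>)"
  have "0 < \<delta>"
    using \<open>0 < m\<close> K by (simp add: \<delta>_def)
  then obtain a b where ab: "0 \<le> a" "a < b" "b \<le> 1" "r \<in> {a..b}" "b - a = min \<delta> 1"
    using exists_interval_around r(1) by blast
  show ?thesis
  proof (rule that[OF ab(1-3) \<sigma>(1) \<open>0 < m\<close>])
    show "a = 0 \<and> b = 1 \<or> (m / (2 * holder_norm \<tau> g)) powr (1 / \<tau>) \<le> b - a"
      using ab by (auto simp: \<delta>_def min_def split: if_splits)
    have "m / 2 \<le> sgn (g r) * g t" if "t \<in> {a..b}" for t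
      using that ab \<open>0 < m\<close> by (intro holder_near_extremum[OF g \<open>0 < \<tau>\<close> K r(1) \<sigma>]) (auto simp: \<delta>_def abs_le_iff)
    then show "\<forall>t\<in>{a..b}. m / 2 \<le> sgn (g r) * g t"
      by blast
  qed
qed

theorem proposition4p1:
  fixes M :: "'w measure" and n :: nat
    and I :: "'h::{real_inner, complete_space} \<Rightarrow> 'w \<Rightarrow> real"
    and f :: "real \<Rightarrow> 'h" and X :: "real \<Rightarrow> 'w \<Rightarrow> real"
    and g :: "real \<Rightarrow> real" and C \<theta> \<beta> \<rho> \<tau> :: real
  assumes "prob_space M" and "complete_measure M"
    and I_meas: "\<And>h. I h \<in> borel_measurable M"
    and I_sq: "\<And>h. integrable M (\<lambda>\<omega>. (I h \<omega>)^2)"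
    and I_isometry: "\<And>h k. (\<integral>\<omega>. I h \<omega> * I k \<omega> \<partial>M) = fact n * inner h k"
    and X_version: "\<And>t. t \<in> {0..1} \<Longrightarrow> AE \<omega> in M. X t \<omega> = I (f t) \<omega>"
    and X_cont: "\<And>\<omega>. \<omega> \<in> space M \<Longrightarrow> continuous_on {0..1} (\<lambda>t. X t \<omega>)"
    and A1: "assumption1 f C \<theta>"
    and A3: "assumption3 f \<beta>"
    and A4: "assumption4 f"
    and rho: "\<rho> < \<theta> / 2"
    and X_holder: "AE \<omega> in M. holder_on \<rho> (\<lambda>t. X t \<omega>)"
    and tau: "0 < \<tau>" "\<tau> \<le> 1" "\<tau> + \<rho> > 1"
    and g_holder: "holder_on \<tau> g"
    and g_nonzero: "holder_norm \<tau> g \<noteq> 0"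
  shows "(\<integral>\<omega>. (young_integral g (\<lambda>t. X t \<omega>))^2 \<partial>M)
            \<ge> \<beta> / 4 * (SUP r\<in>{0..1}. \<bar>g r\<bar>)^2 * (\<integral>\<omega>. (X 1 \<omega>)^2 \<partial>M)
       \<or> (\<exists>a b. 0 \<le> a \<and> a \<le> b \<and> b \<le> 1 \<and>
            ((SUP r\<in>{0..1}. \<bar>g r\<bar>) / (2 * holder_norm \<tau> g)) powr (1 / \<tau>) \<le> \<bar>b - a\<bar> \<and>
            (\<integral>\<omega>. (young_integral g (\<lambda>t. X t \<omega>))^2 \<partial>M)
              \<ge> \<beta> / 4 * (SUP r\<in>{0..1}. \<bar>g r\<bar>)^2 * (\<integral>\<omega>. (X b \<omega> - X a \<omega>)^2 \<partial>M))"
proof -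
  have iso: "l2_isometry M (fact n) I"
    using I_meas I_sq I_isometry by (simp add: l2_isometry_def)
  have "0 < C" "1 < \<theta>" "f 0 = 0"
    using A1 by (auto simp: assumption1_def)
  then obtain F where F: "riemann_sum_limit g f F"
    using riemann_sum_limit_exists_holder[OF g_holder assumption1_holder[OF A1]] tau rho by fastforce
  have paths: "AE \<omega> in M. riemann_sum_limit g (\<lambda>t. X t \<omega>) (young_integral g (\<lambda>t. X t \<omega>))"
    using X_holder by eventually_elim (use tau in \<open>auto intro: riemann_sum_limit_young_integral[OF g_holder]\<close>)
  have "(\<integral>\<omega>. (X 1 \<omega> - X 0 \<omega>)\<^sup>2 \<partial>M) = fact n * (norm (f 1 - f 0))\<^sup>2"
    using X_version by (intro integral_square_increment_l2_isometry[OF iso \<open>complete_measure M\<close>]) auto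
  then have X1: "(\<integral>\<omega>. (X 1 \<omega>)\<^sup>2 \<partial>M) = (\<integral>\<omega>. (X 1 \<omega> - X 0 \<omega>)\<^sup>2 \<partial>M)"
    using integral_square_AE_eq_l2_isometry_complete[OF iso \<open>complete_measure M\<close> X_version[of 1]] \<open>f 0 = 0\<close>
    by simp
  obtain a b \<sigma> where ab: "0 \<le> a" "a < b" "b \<le> 1" and "\<bar>\<sigma>\<bar> = 1" "0 < (SUP r\<in>{0..1}. \<bar>g r\<bar>)"
    and long: "a = 0 \<and> b = 1 \<or> ((SUP r\<in>{0..1}. \<bar>g r\<bar>) / (2 * holder_norm \<tau> g)) powr (1 / \<tau>) \<le> b - a"
    and "\<forall>t\<in>{a..b}. (SUP r\<in>{0..1}. \<bar>g r\<bar>) / 2 \<le> \<sigma> * g t"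
    by (rule holder_sup_interval[OF g_holder tau(1) g_nonzero])
  then have "\<beta> * ((SUP r\<in>{0..1}. \<bar>g r\<bar>) / 2)\<^sup>2 * (\<integral>\<omega>. (X b \<omega> - X a \<omega>)\<^sup>2 \<partial>M)
      \<le> (\<integral>\<omega>. (young_integral g (\<lambda>t. X t \<omega>))\<^sup>2 \<partial>M)"
    by (intro integral_square_young_integral_lower_bound[OF iso _ \<open>complete_measure M\<close> X_version paths F A3 A4])
      auto
  then have main: "\<beta> / 4 * (SUP r\<in>{0..1}. \<bar>g r\<bar>)\<^sup>2 * (\<integral>\<omega>. (X b \<omega> - X a \<omega>)\<^sup>2 \<partial>M)
      \<le> (\<integral>\<omega>. (young_integral g (\<lambda>t. X t \<omega>))\<^sup>2 \<partial>M)"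
    by (simp add: power_divide)
  show ?thesis
  proof (cases "a = 0 \<and> b = 1")
    case True
    then show ?thesis
      using main X1 by simp
  next
    case False
    then show ?thesis
      using main long ab by (intro disjI2 exI[of _ a] exI[of _ b]) auto
  qed
qed

end
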